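(* Let $n\ge3$, let $\Phi,\Phi':\mathfrak{B}([n])^{op}\to\mathbf{Gpd}$ be functors and $\theta:\Phi\to\Phi'$ a natural transformation such that $\theta_S:\Phi(S)\to\Phi'(S)$ is an equivalence of categories for every $S\subseteq[n]$ with $n-3\le|S|\le n-1$. Then the induced functor $\operatorname{2lim}_{\mathfrak{B}([n])}\Phi\to\operatorname{2lim}_{\mathfrak{B}([n])}\Phi'$ is an equivalence of categories.
   Context: $[n]=\{1,\dots,n\}$; $\mathfrak{B}([n])$ is the poset of proper subsets of $[n]$ ordered by inclusion. For a functor $\Psi:I^{op}\to\mathbf{Gpd}$ on a poset, $\operatorname{2lim}\Psi$ is the groupoid whose objects are families $(a_U,\alpha_{U,V})$ with $a_U\in\Psi(U)$ and isomorphisms $\alpha_{U,V}:\Psi_{U,V}(a_V)\to a_U$ for $U\le V$ (where $\Psi_{U,V}:\Psi(V)\to\Psi(U)$) satisfying $\alpha_{U,U}=\mathrm{id}$ and $\alpha_{U,W}=\alpha_{U,V}\circ\Psi_{U,V}(\alpha_{V,W})$, and whose morphisms are families $g_U:a_U\to b_U$ with $g_U\circ\alpha_{U,V}=\beta_{U,V}\circ\Psi_{U,V}(g_V)$. The induced functor sends $(a_U,\alpha_{U,V})$ to $(\theta_U(a_U),\theta_U(\alpha_{U,V}))$. *)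

theory Defs
  imports Main
begin

record ('o, 'm) cat =
  cObj  :: "'o set"
  cArr  :: "'m set"
  cDom  :: "'m \<Rightarrow> 'o"
  cCod  :: "'m \<Rightarrow> 'o"
  cId   :: "'o \<Rightarrow> 'm"
  cComp :: "'m \<Rightarrow> 'm \<Rightarrow> 'm"   (* cComp C g f  =  g \<circ> f *)

definition hom :: "('o, 'm) cat \<Rightarrow> 'o \<Rightarrow> 'o \<Rightarrow> 'm set" where
  "hom C x y = {f \<in> cArr C. cDom C f = x \<and> cCod C f = y}"

definition category :: "('o, 'm) cat \<Rightarrow> bool" where
  "category C \<longleftrightarrow>
     (\<forall>f\<in>cArr C. cDom C f \<in> cObj C \<and> cCod C f \<in> cObj C) \<and>
     (\<forall>x\<in>cObj C. cId C x \<in> hom C x x) \<and>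
     (\<forall>f\<in>cArr C. \<forall>g\<in>cArr C. cCod C f = cDom C g \<longrightarrow>
         cComp C g f \<in> hom C (cDom C f) (cCod C g)) \<and>
     (\<forall>f\<in>cArr C. cComp C (cId C (cCod C f)) f = f \<and> cComp C f (cId C (cDom C f)) = f) \<and>
     (\<forall>f\<in>cArr C. \<forall>g\<in>cArr C. \<forall>h\<in>cArr C. cCod C f = cDom C g \<longrightarrow> cCod C g = cDom C h \<longrightarrow>
         cComp C h (cComp C g f) = cComp C (cComp C h g) f)"

definition c_iso :: "('o, 'm) cat \<Rightarrow> 'm \<Rightarrow> bool" where
  "c_iso C f \<longleftrightarrow> f \<in> cArr C \<and>
     (\<exists>g\<in>hom C (cCod C f) (cDom C f).
        cComp C g f = cId C (cDom C f) \<and> cComp C f g = cId C (cCod C f))"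

definition groupoid :: "('o, 'm) cat \<Rightarrow> bool" where
  "groupoid C \<longleftrightarrow> category C \<and> (\<forall>f\<in>cArr C. c_iso C f)"

record ('o1, 'm1, 'o2, 'm2) func =
  fobj :: "'o1 \<Rightarrow> 'o2"
  farr :: "'m1 \<Rightarrow> 'm2"

definition is_functor :: "('o1, 'm1) cat \<Rightarrow> ('o2, 'm2) cat \<Rightarrow> ('o1, 'm1, 'o2, 'm2) func \<Rightarrow> bool" where
  "is_functor C D F \<longleftrightarrow>
     (\<forall>x\<in>cObj C. fobj F x \<in> cObj D) \<and>
     (\<forall>f\<in>cArr C. farr F f \<in> hom D (fobj F (cDom C f)) (fobj F (cCod C f))) \<and>
     (\<forall>x\<in>cObj C. farr F (cId C x) = cId D (fobj F x)) \<and>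
     (\<forall>f\<in>cArr C. \<forall>g\<in>cArr C. cCod C f = cDom C g \<longrightarrow>
         farr F (cComp C g f) = cComp D (farr F g) (farr F f))"

definition id_func :: "('o, 'm, 'o, 'm) func" where
  "id_func = \<lparr>fobj = (\<lambda>x. x), farr = (\<lambda>f. f)\<rparr>"

definition func_comp :: "('o2, 'm2, 'o3, 'm3) func \<Rightarrow> ('o1, 'm1, 'o2, 'm2) func \<Rightarrow> ('o1, 'm1, 'o3, 'm3) func" where
  "func_comp G F = \<lparr>fobj = fobj G \<circ> fobj F, farr = farr G \<circ> farr F\<rparr>"

definition nat_iso :: "('o1, 'm1) cat \<Rightarrow> ('o2, 'm2) cat \<Rightarrow> ('o1, 'm1, 'o2, 'm2) func \<Rightarrow>
    ('o1, 'm1, 'o2, 'm2) func \<Rightarrow> ('o1 \<Rightarrow> 'm2) \<Rightarrow> bool" where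
  "nat_iso C D F G eta \<longleftrightarrow>
     (\<forall>x\<in>cObj C. eta x \<in> hom D (fobj F x) (fobj G x) \<and> c_iso D (eta x)) \<and>
     (\<forall>f\<in>cArr C. cComp D (eta (cCod C f)) (farr F f) = cComp D (farr G f) (eta (cDom C f)))"

definition equivalence :: "('o1, 'm1) cat \<Rightarrow> ('o2, 'm2) cat \<Rightarrow> ('o1, 'm1, 'o2, 'm2) func \<Rightarrow> bool" where
  "equivalence C D F \<longleftrightarrow> is_functor C D F \<and>
     (\<exists>G eta eps. is_functor D C G \<and>
        nat_iso C C id_func (func_comp G F) eta \<and>
        nat_iso D D (func_comp F G) id_func eps)"

definition Bn :: "nat \<Rightarrow> nat set set" where
  "Bn n = {U. U \<subset> {1..n}}"

text \<open>A functor Psi : B([n])^op -> Gpd: groupoids Psi U and restriction functors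
  P U V : Psi V -> Psi U for U \<subseteq> V, strictly functorial.\<close>
definition gpd_presheaf :: "nat \<Rightarrow> (nat set \<Rightarrow> ('o, 'm) cat) \<Rightarrow>
    (nat set \<Rightarrow> nat set \<Rightarrow> ('o, 'm, 'o, 'm) func) \<Rightarrow> bool" where
  "gpd_presheaf n Psi P \<longleftrightarrow>
     (\<forall>U\<in>Bn n. groupoid (Psi U)) \<and>
     (\<forall>U\<in>Bn n. \<forall>V\<in>Bn n. U \<subseteq> V \<longrightarrow> is_functor (Psi V) (Psi U) (P U V)) \<and>
     (\<forall>U\<in>Bn n. (\<forall>x\<in>cObj (Psi U). fobj (P U U) x = x) \<and> (\<forall>f\<in>cArr (Psi U). farr (P U U) f = f)) \<and>
     (\<forall>U\<in>Bn n. \<forall>V\<in>Bn n. \<forall>W\<in>Bn n. U \<subseteq> V \<longrightarrow> V \<subseteq> W \<longrightarrow>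
        (\<forall>x\<in>cObj (Psi W). fobj (P U V) (fobj (P V W) x) = fobj (P U W) x) \<and>
        (\<forall>f\<in>cArr (Psi W). farr (P U V) (farr (P V W) f) = farr (P U W) f))"

definition gpd_nat_trans :: "nat \<Rightarrow> (nat set \<Rightarrow> ('o, 'm) cat) \<Rightarrow> (nat set \<Rightarrow> nat set \<Rightarrow> ('o, 'm, 'o, 'm) func) \<Rightarrow>
    (nat set \<Rightarrow> ('o2, 'm2) cat) \<Rightarrow> (nat set \<Rightarrow> nat set \<Rightarrow> ('o2, 'm2, 'o2, 'm2) func) \<Rightarrow>
    (nat set \<Rightarrow> ('o, 'm, 'o2, 'm2) func) \<Rightarrow> bool" where
  "gpd_nat_trans n Psi P Psi' P' theta \<longleftrightarrow>
     (\<forall>U\<in>Bn n. is_functor (Psi U) (Psi' U) (theta U)) \<and>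
     (\<forall>U\<in>Bn n. \<forall>V\<in>Bn n. U \<subseteq> V \<longrightarrow>
        (\<forall>x\<in>cObj (Psi V). fobj (theta U) (fobj (P U V) x) = fobj (P' U V) (fobj (theta V) x)) \<and>
        (\<forall>f\<in>cArr (Psi V). farr (theta U) (farr (P U V) f) = farr (P' U V) (farr (theta V) f)))"

definition lim_obj :: "nat \<Rightarrow> (nat set \<Rightarrow> ('o, 'm) cat) \<Rightarrow> (nat set \<Rightarrow> nat set \<Rightarrow> ('o, 'm, 'o, 'm) func) \<Rightarrow>
    ((nat set \<Rightarrow> 'o) \<times> (nat set \<Rightarrow> nat set \<Rightarrow> 'm)) set" where
  "lim_obj n Psi P = {(a, al).
     (\<forall>U. U \<notin> Bn n \<longrightarrow> a U = undefined) \<and>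
     (\<forall>U V. \<not> (U \<in> Bn n \<and> V \<in> Bn n \<and> U \<subseteq> V) \<longrightarrow> al U V = undefined) \<and>
     (\<forall>U\<in>Bn n. a U \<in> cObj (Psi U)) \<and>
     (\<forall>U\<in>Bn n. \<forall>V\<in>Bn n. U \<subseteq> V \<longrightarrow> al U V \<in> hom (Psi U) (fobj (P U V) (a V)) (a U)) \<and>
     (\<forall>U\<in>Bn n. al U U = cId (Psi U) (a U)) \<and>
     (\<forall>U\<in>Bn n. \<forall>V\<in>Bn n. \<forall>W\<in>Bn n. U \<subseteq> V \<longrightarrow> V \<subseteq> W \<longrightarrow>
        al U W = cComp (Psi U) (al U V) (farr (P U V) (al V W)))}"

definition lim_arr :: "nat \<Rightarrow> (nat set \<Rightarrow> ('o, 'm) cat) \<Rightarrow> (nat set \<Rightarrow> nat set \<Rightarrow> ('o, 'm, 'o, 'm) func) \<Rightarrow>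
    (((nat set \<Rightarrow> 'o) \<times> (nat set \<Rightarrow> nat set \<Rightarrow> 'm)) \<times>
     ((nat set \<Rightarrow> 'o) \<times> (nat set \<Rightarrow> nat set \<Rightarrow> 'm)) \<times> (nat set \<Rightarrow> 'm)) set" where
  "lim_arr n Psi P = {(x, y, g).
     x \<in> lim_obj n Psi P \<and> y \<in> lim_obj n Psi P \<and>
     (\<forall>U. U \<notin> Bn n \<longrightarrow> g U = undefined) \<and>
     (\<forall>U\<in>Bn n. g U \<in> hom (Psi U) (fst x U) (fst y U)) \<and>
     (\<forall>U\<in>Bn n. \<forall>V\<in>Bn n. U \<subseteq> V \<longrightarrow>
        cComp (Psi U) (g U) (snd x U V) = cComp (Psi U) (snd y U V) (farr (P U V) (g V)))}"

definition twolim :: "nat \<Rightarrow> (nat set \<Rightarrow> ('o, 'm) cat) \<Rightarrow> (nat set \<Rightarrow> nat set \<Rightarrow> ('o, 'm, 'o, 'm) func) \<Rightarrow>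
    ((nat set \<Rightarrow> 'o) \<times> (nat set \<Rightarrow> nat set \<Rightarrow> 'm),
     ((nat set \<Rightarrow> 'o) \<times> (nat set \<Rightarrow> nat set \<Rightarrow> 'm)) \<times>
     ((nat set \<Rightarrow> 'o) \<times> (nat set \<Rightarrow> nat set \<Rightarrow> 'm)) \<times> (nat set \<Rightarrow> 'm)) cat" where
  "twolim n Psi P = \<lparr>
     cObj = lim_obj n Psi P,
     cArr = lim_arr n Psi P,
     cDom = (\<lambda>(x, y, g). x),
     cCod = (\<lambda>(x, y, g). y),
     cId = (\<lambda>x. (x, x, \<lambda>U. if U \<in> Bn n then cId (Psi U) (fst x U) else undefined)),
     cComp = (\<lambda>(y, z, h) (x, y', g). (x, z, \<lambda>U. if U \<in> Bn n then cComp (Psi U) (h U) (g U) else undefined))\<rparr>"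

definition lim_fobj :: "nat \<Rightarrow> (nat set \<Rightarrow> ('o, 'm, 'o2, 'm2) func) \<Rightarrow>
    (nat set \<Rightarrow> 'o) \<times> (nat set \<Rightarrow> nat set \<Rightarrow> 'm) \<Rightarrow> (nat set \<Rightarrow> 'o2) \<times> (nat set \<Rightarrow> nat set \<Rightarrow> 'm2)" where
  "lim_fobj n theta = (\<lambda>(a, al).
     (\<lambda>U. if U \<in> Bn n then fobj (theta U) (a U) else undefined,
      \<lambda>U V. if U \<in> Bn n \<and> V \<in> Bn n \<and> U \<subseteq> V then farr (theta U) (al U V) else undefined))"

definition lim_func :: "nat \<Rightarrow> (nat set \<Rightarrow> ('o, 'm, 'o2, 'm2) func) \<Rightarrow>
    ((nat set \<Rightarrow> 'o) \<times> (nat set \<Rightarrow> nat set \<Rightarrow> 'm),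
     ((nat set \<Rightarrow> 'o) \<times> (nat set \<Rightarrow> nat set \<Rightarrow> 'm)) \<times>
     ((nat set \<Rightarrow> 'o) \<times> (nat set \<Rightarrow> nat set \<Rightarrow> 'm)) \<times> (nat set \<Rightarrow> 'm),
     (nat set \<Rightarrow> 'o2) \<times> (nat set \<Rightarrow> nat set \<Rightarrow> 'm2),
     ((nat set \<Rightarrow> 'o2) \<times> (nat set \<Rightarrow> nat set \<Rightarrow> 'm2)) \<times>
     ((nat set \<Rightarrow> 'o2) \<times> (nat set \<Rightarrow> nat set \<Rightarrow> 'm2)) \<times> (nat set \<Rightarrow> 'm2)) func" where
  "lim_func n theta = \<lparr>
     fobj = lim_fobj n theta,
     farr = (\<lambda>(x, y, g). (lim_fobj n theta x, lim_fobj n theta y,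
                          \<lambda>U. if U \<in> Bn n then farr (theta U) (g U) else undefined))\<rparr>"

end

theory Submission
  imports Defs
begin

text \<open>Call a proper subset of [n] large if it has at least n - 3 elements. Every proper subset
  lies in a coatom (a subset with n - 1 elements), and any three coatoms meet in a large set. Hence
  the 2-limit over B([n]) is already determined by its restriction to the large sets: an arrow is
  fixed by its components there and any compatible family on the large sets extends; an object given
  on the large sets extends by glueing, over each smaller U, the restrictions from the coatoms above U
  along a cocone in the groupoid Psi(U), whose coherence needs exactly the triple intersections.
  Since theta is an equivalence on every large set, the induced functor between the 2-limits is
  faithful, full and essentially surjective, hence an equivalence of groupoids.\<close>

section \<open>Categories, groupoids and functors\<close>

lemma cat_dom [simp]: "category C \<Longrightarrow> f \<in> cArr C \<Longrightarrow> cDom C f \<in> cObj C"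
  and cat_cod [simp]: "category C \<Longrightarrow> f \<in> cArr C \<Longrightarrow> cCod C f \<in> cObj C"
  by (auto simp: category_def)

lemma cat_comp [simp]:
  assumes "category C" "f \<in> cArr C" "g \<in> cArr C" "cCod C f = cDom C g"
  shows "cComp C g f \<in> cArr C" "cDom C (cComp C g f) = cDom C f" "cCod C (cComp C g f) = cCod C g"
  using assms unfolding category_def hom_def by blast+

lemma cat_id [simp]:
  assumes "category C" "x \<in> cObj C"
  shows "cId C x \<in> cArr C" "cDom C (cId C x) = x" "cCod C (cId C x) = x"
  using assms unfolding category_def hom_def by blast+

lemma cat_id_left [simp]: "category C \<Longrightarrow> f \<in> cArr C \<Longrightarrow> cCod C f = y \<Longrightarrow> cComp C (cId C y) f = f"
  and cat_id_right [simp]: "category C \<Longrightarrow> f \<in> cArr C \<Longrightarrow> cDom C f = x \<Longrightarrow> cComp C f (cId C x) = f"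
  unfolding category_def by blast+

lemma cat_assoc:
  "category C \<Longrightarrow> f \<in> cArr C \<Longrightarrow> g \<in> cArr C \<Longrightarrow> h \<in> cArr C \<Longrightarrow> cCod C f = cDom C g \<Longrightarrow>
   cCod C g = cDom C h \<Longrightarrow> cComp C h (cComp C g f) = cComp C (cComp C h g) f"
  unfolding category_def by blast

definition cInv :: "('o, 'm) cat \<Rightarrow> 'm \<Rightarrow> 'm" where
  "cInv C f = (SOME g. g \<in> hom C (cCod C f) (cDom C f) \<and>
     cComp C g f = cId C (cDom C f) \<and> cComp C f g = cId C (cCod C f))"

lemma iso_cInv:
  assumes "c_iso C f"
  shows "cInv C f \<in> cArr C" "cDom C (cInv C f) = cCod C f" "cCod C (cInv C f) = cDom C f"
    "cComp C (cInv C f) f = cId C (cDom C f)" "cComp C f (cInv C f) = cId C (cCod C f)"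
proof -
  from assms obtain g where "g \<in> hom C (cCod C f) (cDom C f) \<and>
      cComp C g f = cId C (cDom C f) \<and> cComp C f g = cId C (cCod C f)"
    unfolding c_iso_def by blast
  then have "cInv C f \<in> hom C (cCod C f) (cDom C f) \<and>
      cComp C (cInv C f) f = cId C (cDom C f) \<and> cComp C f (cInv C f) = cId C (cCod C f)"
    unfolding cInv_def by (rule someI)
  then show "cInv C f \<in> cArr C" "cDom C (cInv C f) = cCod C f" "cCod C (cInv C f) = cDom C f"
    "cComp C (cInv C f) f = cId C (cDom C f)" "cComp C f (cInv C f) = cId C (cCod C f)"
    by (auto simp: hom_def)
qed

lemma groupoid_category [simp]: "groupoid C \<Longrightarrow> category C"
  by (simp add: groupoid_def)

lemma groupoid_iso: "groupoid C \<Longrightarrow> f \<in> cArr C \<Longrightarrow> c_iso C f"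
  by (simp add: groupoid_def)

lemma groupoid_cInv [simp]:
  assumes "groupoid C" "f \<in> cArr C"
  shows "cInv C f \<in> cArr C" "cDom C (cInv C f) = cCod C f" "cCod C (cInv C f) = cDom C f"
    "cComp C (cInv C f) f = cId C (cDom C f)" "cComp C f (cInv C f) = cId C (cCod C f)"
  using iso_cInv[OF groupoid_iso[OF assms]] by auto

lemma groupoid_comp_cInv_cancel [simp]:
  assumes "groupoid C" "f \<in> cArr C" "h \<in> cArr C" "cDom C h = cDom C f"
  shows "cComp C (cComp C h (cInv C f)) f = h"
  using cat_assoc[of C f "cInv C f" h] assms by simp

lemma groupoid_comp_cancel_cInv [simp]:
  assumes "groupoid C" "f \<in> cArr C" "h \<in> cArr C" "cDom C h = cCod C f"
  shows "cComp C (cComp C h f) (cInv C f) = h"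
  using cat_assoc[of C "cInv C f" f h] assms by simp

lemma iso_cancel_right:
  assumes "category C" "c_iso C i" "a \<in> cArr C" "b \<in> cArr C"
    "cDom C a = cCod C i" "cDom C b = cCod C i" "cComp C a i = cComp C b i"
  shows "a = b"
proof -
  note inv = iso_cInv[OF assms(2)]
  have i: "i \<in> cArr C" using assms(2) by (simp add: c_iso_def)
  have "a = cComp C (cComp C a i) (cInv C i)"
    using cat_assoc[of C "cInv C i" i a] assms inv i by simp
  also have "\<dots> = cComp C (cComp C b i) (cInv C i)" using assms(7) by simp
  also have "\<dots> = b"
    using cat_assoc[of C "cInv C i" i b] assms inv i by simp
  finally show ?thesis .
qed

lemma iso_cancel_left:
  assumes "category C" "c_iso C i" "a \<in> cArr C" "b \<in> cArr C"
    "cCod C a = cDom C i" "cCod C b = cDom C i" "cComp C i a = cComp C i b"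
  shows "a = b"
proof -
  note inv = iso_cInv[OF assms(2)]
  have i: "i \<in> cArr C" using assms(2) by (simp add: c_iso_def)
  have "a = cComp C (cInv C i) (cComp C i a)"
    using cat_assoc[of C a i "cInv C i"] assms inv i by simp
  also have "\<dots> = cComp C (cInv C i) (cComp C i b)" using assms(7) by simp
  also have "\<dots> = b"
    using cat_assoc[of C b i "cInv C i"] assms inv i by simp
  finally show ?thesis .
qed

lemma cInv_unique:
  assumes "category C" "c_iso C f" "g \<in> cArr C" "cDom C g = cCod C f"
    "cComp C g f = cId C (cDom C f)"
  shows "g = cInv C f"
proof -
  have f: "f \<in> cArr C" using assms(2) by (simp add: c_iso_def)
  show ?thesis
    by (rule iso_cancel_right[OF assms(1,2)]) (use iso_cInv[OF assms(2)] assms f in auto)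
qed

lemma groupoid_cInv_comp [simp]:
  assumes "groupoid C" "f \<in> cArr C" "g \<in> cArr C" "cCod C f = cDom C g"
  shows "cInv C (cComp C g f) = cComp C (cInv C f) (cInv C g)"
proof -
  have "cComp C (cComp C (cInv C f) (cInv C g)) (cComp C g f) = cId C (cDom C (cComp C g f))"
    using assms by (simp add: cat_assoc)
  with assms show ?thesis
    by (auto intro!: cInv_unique[symmetric] simp: groupoid_iso)
qed

lemma groupoid_cInv_id [simp]:
  assumes "groupoid C" "x \<in> cObj C"
  shows "cInv C (cId C x) = cId C x"
  using assms by (auto intro!: cInv_unique[symmetric] simp: groupoid_iso)

lemma comm_square_paste:
  assumes C: "category C"
    and arr: "a \<in> cArr C" "g1 \<in> cArr C" "b \<in> cArr C" "g2 \<in> cArr C" "h1 \<in> cArr C" "c \<in> cArr C" "h2 \<in> cArr C"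
    and d: "cCod C a = cDom C g1" "cCod C g2 = cDom C b" "cCod C g1 = cDom C h1"
      "cCod C h2 = cDom C c" "cCod C b = cDom C h1" "cCod C g2 = cDom C h2"
    and sq1: "cComp C g1 a = cComp C b g2" and sq2: "cComp C h1 b = cComp C c h2"
  shows "cComp C (cComp C h1 g1) a = cComp C c (cComp C h2 g2)"
proof -
  have "cComp C (cComp C h1 g1) a = cComp C h1 (cComp C g1 a)"
    using cat_assoc[OF C arr(1,2,5) d(1,3)] by simp
  also have "\<dots> = cComp C (cComp C h1 b) g2"
    using sq1 cat_assoc[OF C arr(4,3,5) d(2,5)] by simp
  also have "\<dots> = cComp C c (cComp C h2 g2)"
    using sq2 cat_assoc[OF C arr(4,7,6) d(6,4)] by simp
  finally show ?thesis .
qed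

lemma comm_square_cInv:
  assumes C: "groupoid C"
    and arr: "a \<in> cArr C" "g1 \<in> cArr C" "b \<in> cArr C" "g2 \<in> cArr C"
    and d: "cCod C a = cDom C g1" "cCod C g2 = cDom C b" "cCod C b = cCod C g1" "cDom C a = cDom C g2"
    and sq: "cComp C g1 a = cComp C b g2"
  shows "cComp C (cInv C g1) b = cComp C a (cInv C g2)"
proof -
  have "cComp C (cInv C g1) b = cComp C (cInv C g1) (cComp C (cComp C b g2) (cInv C g2))"
    using C arr d by simp
  also have "\<dots> = cComp C (cInv C g1) (cComp C (cComp C g1 a) (cInv C g2))" using sq by simp
  also have "\<dots> = cComp C a (cInv C g2)" using C arr d by (simp add: cat_assoc)
  finally show ?thesis .
qed

lemma functor_obj [simp]: "is_functor C D F \<Longrightarrow> x \<in> cObj C \<Longrightarrow> fobj F x \<in> cObj D"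
  unfolding is_functor_def by blast

lemma functor_arr [simp]:
  assumes "is_functor C D F" "f \<in> cArr C"
  shows "farr F f \<in> cArr D" "cDom D (farr F f) = fobj F (cDom C f)"
    "cCod D (farr F f) = fobj F (cCod C f)"
  using assms unfolding is_functor_def hom_def by blast+

lemma functor_id [simp]: "is_functor C D F \<Longrightarrow> x \<in> cObj C \<Longrightarrow> farr F (cId C x) = cId D (fobj F x)"
  unfolding is_functor_def by blast

lemma functor_comp [simp]:
  "is_functor C D F \<Longrightarrow> f \<in> cArr C \<Longrightarrow> g \<in> cArr C \<Longrightarrow> cCod C f = cDom C g \<Longrightarrow>
   farr F (cComp C g f) = cComp D (farr F g) (farr F f)"
  unfolding is_functor_def by blast

lemma functor_cInv [simp]:
  assumes "is_functor C D F" "groupoid C" "groupoid D" "f \<in> cArr C"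
  shows "farr F (cInv C f) = cInv D (farr F f)"
proof -
  have "cComp D (farr F (cInv C f)) (farr F f) = cId D (cDom D (farr F f))"
    using functor_comp[of C D F f "cInv C f"] assms by simp
  with assms show ?thesis
    by (auto intro!: cInv_unique simp: groupoid_iso)
qed

lemma is_functor_id_func: "category C \<Longrightarrow> is_functor C C id_func"
  unfolding is_functor_def id_func_def hom_def by auto

lemma is_functor_func_comp:
  assumes "is_functor C D F" "is_functor D E G"
  shows "is_functor C E (func_comp G F)"
  using assms unfolding is_functor_def func_comp_def hom_def by auto

lemma nat_iso_cInv:
  assumes C: "category C" and D: "groupoid D" and F: "is_functor C D F" and G: "is_functor C D G"
    and eta: "nat_iso C D F G eta"
  shows "nat_iso C D G F (\<lambda>x. cInv D (eta x))"
  unfolding nat_iso_def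
proof (intro conjI ballI)
  fix x assume "x \<in> cObj C"
  then have "eta x \<in> cArr D" "cDom D (eta x) = fobj F x" "cCod D (eta x) = fobj G x"
    using eta by (auto simp: nat_iso_def hom_def)
  then show "cInv D (eta x) \<in> hom D (fobj G x) (fobj F x)" "c_iso D (cInv D (eta x))"
    using D by (auto simp: hom_def groupoid_iso)
next
  fix f assume f: "f \<in> cArr C"
  have comp: "eta z \<in> cArr D \<and> cDom D (eta z) = fobj F z \<and> cCod D (eta z) = fobj G z"
    if "z \<in> cObj C" for z
    using eta that by (auto simp: nat_iso_def hom_def)
  have "cComp D (eta (cCod C f)) (farr F f) = cComp D (farr G f) (eta (cDom C f))"
    using eta f by (simp add: nat_iso_def)
  then show "cComp D (cInv D (eta (cCod C f))) (farr G f) = cComp D (farr F f) (cInv D (eta (cDom C f)))"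
    using comm_square_cInv[OF D] comp[of "cDom C f"] comp[of "cCod C f"] C F G f by simp
qed

section \<open>Equivalences of groupoids\<close>

definition faithful :: "('o1, 'm1) cat \<Rightarrow> ('o1, 'm1, 'o2, 'm2) func \<Rightarrow> bool" where
  "faithful C F \<longleftrightarrow> (\<forall>x y. \<forall>f\<in>hom C x y. \<forall>f'\<in>hom C x y. farr F f = farr F f' \<longrightarrow> f = f')"

definition full :: "('o1, 'm1) cat \<Rightarrow> ('o2, 'm2) cat \<Rightarrow> ('o1, 'm1, 'o2, 'm2) func \<Rightarrow> bool" where
  "full C D F \<longleftrightarrow>
     (\<forall>x\<in>cObj C. \<forall>y\<in>cObj C. \<forall>h\<in>hom D (fobj F x) (fobj F y). \<exists>f\<in>hom C x y. farr F f = h)"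

definition ess_surj :: "('o1, 'm1) cat \<Rightarrow> ('o2, 'm2) cat \<Rightarrow> ('o1, 'm1, 'o2, 'm2) func \<Rightarrow> bool" where
  "ess_surj C D F \<longleftrightarrow> (\<forall>y\<in>cObj D. \<exists>x\<in>cObj C. hom D (fobj F x) y \<noteq> {})"

lemma faithfulD: "faithful C F \<Longrightarrow> f \<in> hom C x y \<Longrightarrow> f' \<in> hom C x y \<Longrightarrow> farr F f = farr F f' \<Longrightarrow> f = f'"
  unfolding faithful_def by blast

lemma fullE:
  assumes "full C D F" "x \<in> cObj C" "y \<in> cObj C" "h \<in> hom D (fobj F x) (fobj F y)"
  obtains f where "f \<in> hom C x y" "farr F f = h"
  using assms unfolding full_def by blast

lemma ess_surjE:
  assumes "ess_surj C D F" "y \<in> cObj D"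
  obtains x e where "x \<in> cObj C" "e \<in> hom D (fobj F x) y"
  using assms unfolding ess_surj_def by blast

lemma faithful_if_nat_iso_id:
  assumes C: "groupoid C" and eta: "nat_iso C C id_func (func_comp G F) eta"
  shows "faithful C F"
  unfolding faithful_def
proof (intro allI ballI impI)
  fix x y f f' assume f: "f \<in> hom C x y" "f' \<in> hom C x y" and Ff: "farr F f = farr F f'"
  have nat: "cComp C (eta y) g = cComp C (farr G (farr F g)) (eta x)" if "g \<in> hom C x y" for g
    using eta that by (auto simp: nat_iso_def id_func_def func_comp_def hom_def)
  have "y \<in> cObj C" using f C by (auto simp: hom_def)
  then have eta_y: "eta y \<in> hom C y (fobj G (fobj F y))" "c_iso C (eta y)"
    using eta by (simp_all add: nat_iso_def id_func_def func_comp_def)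
  have eq: "cComp C (eta y) f = cComp C (eta y) f'"
    using nat[OF f(1)] nat[OF f(2)] Ff by simp
  show "f = f'"
    by (rule iso_cancel_left[OF _ eta_y(2) _ _ _ _ eq]) (use f C eta_y in \<open>auto simp: hom_def\<close>)
qed

lemma equivalenceE:
  assumes "equivalence C D F"
  obtains G eta eps where "is_functor C D F" "is_functor D C G"
    "nat_iso C C id_func (func_comp G F) eta" "nat_iso D D (func_comp F G) id_func eps"
  using assms unfolding equivalence_def by blast

lemma equivalence_faithful:
  assumes "groupoid C" "equivalence C D F"
  shows "faithful C F"
  using assms(2) by (rule equivalenceE) (rule faithful_if_nat_iso_id[OF assms(1)])

lemma equivalence_ess_surj:
  assumes "category D" "equivalence C D F"
  shows "ess_surj C D F"
  unfolding ess_surj_def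
proof
  fix y assume y: "y \<in> cObj D"
  obtain G eps where G: "is_functor D C G" and eps: "nat_iso D D (func_comp F G) id_func eps"
    using assms(2) by (rule equivalenceE)
  have "eps y \<in> hom D (fobj F (fobj G y)) y"
    using eps y by (simp add: nat_iso_def id_func_def func_comp_def)
  with functor_obj[OF G y] show "\<exists>x\<in>cObj C. hom D (fobj F x) y \<noteq> {}"
    by blast
qed

lemma equivalence_full:
  assumes C: "groupoid C" and D: "groupoid D" and "equivalence C D F"
  shows "full C D F"
  unfolding full_def
proof (intro ballI)
  obtain G eta eps where F: "is_functor C D F" and G: "is_functor D C G"
    and eta: "nat_iso C C id_func (func_comp G F) eta" and eps: "nat_iso D D (func_comp F G) id_func eps"
    using assms(3) by (rule equivalenceE)
  \<comment> \<open>The inverted counit exhibits G as faithful, just as the unit does for F.\<close>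
  have "nat_iso D D id_func (func_comp F G) (\<lambda>y. cInv D (eps y))"
    using nat_iso_cInv[OF _ D is_functor_func_comp[OF G F] is_functor_id_func eps] D by simp
  then have G_faithful: "faithful D G"
    using D faithful_if_nat_iso_id by blast
  have eta_comp: "eta z \<in> cArr C \<and> cDom C (eta z) = z \<and> cCod C (eta z) = fobj G (fobj F z) \<and> c_iso C (eta z)"
    if "z \<in> cObj C" for z
    using eta that by (simp add: nat_iso_def id_func_def func_comp_def hom_def)
  have eta_nat: "cComp C (eta (cCod C f)) f = cComp C (farr G (farr F f)) (eta (cDom C f))"
    if "f \<in> cArr C" for f
    using eta that by (simp add: nat_iso_def id_func_def func_comp_def)
  fix x y h assume x: "x \<in> cObj C" and y: "y \<in> cObj C" and h: "h \<in> hom D (fobj F x) (fobj F y)"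
  define f where "f = cComp C (cInv C (eta y)) (cComp C (farr G h) (eta x))"
  have f: "f \<in> hom C x y"
    unfolding f_def using eta_comp[OF x] eta_comp[OF y] h G C by (auto simp: hom_def)
  have "cComp C (farr G (farr F f)) (eta x) = cComp C (eta y) f"
    using eta_nat f by (auto simp: hom_def)
  also have "\<dots> = cComp C (farr G h) (eta x)"
    unfolding f_def using eta_comp[OF x] eta_comp[OF y] h G C
    by (simp add: hom_def cat_assoc[of C "cComp C (farr G h) (eta x)" "cInv C (eta y)" "eta y"])
  finally have eq: "cComp C (farr G (farr F f)) (eta x) = cComp C (farr G h) (eta x)" .
  have "farr G (farr F f) = farr G h"
    by (rule iso_cancel_right[OF _ _ _ _ _ _ eq]) (use eta_comp[OF x] f h F G C in \<open>auto simp: hom_def\<close>)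
  then have "farr F f = h"
    by (rule faithfulD[OF G_faithful _ h, rotated]) (use f F in \<open>auto simp: hom_def\<close>)
  then show "\<exists>f\<in>hom C x y. farr F f = h"
    using f by blast
qed

locale ff_es_functor =
  fixes C :: "('o1, 'm1) cat" and D :: "('o2, 'm2) cat" and F :: "('o1, 'm1, 'o2, 'm2) func"
  assumes groupoid_C: "groupoid C" and groupoid_D: "groupoid D" and F_functor: "is_functor C D F"
    and F_faithful: "faithful C F" and F_full: "full C D F" and F_ess_surj: "ess_surj C D F"
begin

definition pre_obj :: "'o2 \<Rightarrow> 'o1" where
  "pre_obj y = (SOME x. x \<in> cObj C \<and> hom D (fobj F x) y \<noteq> {})"

definition counit :: "'o2 \<Rightarrow> 'm2" where
  "counit y = (SOME e. e \<in> hom D (fobj F (pre_obj y)) y)"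

lemma pre_obj_counit:
  assumes "y \<in> cObj D"
  shows "pre_obj y \<in> cObj C" "counit y \<in> hom D (fobj F (pre_obj y)) y"
proof -
  obtain x e where "x \<in> cObj C" "e \<in> hom D (fobj F x) y"
    by (rule ess_surjE[OF F_ess_surj assms])
  then have "pre_obj y \<in> cObj C \<and> hom D (fobj F (pre_obj y)) y \<noteq> {}"
    unfolding pre_obj_def by (metis (mono_tags, lifting) empty_iff someI)
  then show "pre_obj y \<in> cObj C" "counit y \<in> hom D (fobj F (pre_obj y)) y"
    unfolding counit_def by (auto intro: someI_ex)
qed

lemma counit [simp]:
  assumes "y \<in> cObj D"
  shows "counit y \<in> cArr D" "cDom D (counit y) = fobj F (pre_obj y)" "cCod D (counit y) = y"
  using pre_obj_counit[OF assms] by (auto simp: hom_def)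

definition pre_arr :: "'m2 \<Rightarrow> 'm1" where
  "pre_arr k = (SOME f. f \<in> hom C (pre_obj (cDom D k)) (pre_obj (cCod D k)) \<and>
     farr F f = cComp D (cInv D (counit (cCod D k))) (cComp D k (counit (cDom D k))))"

lemma pre_arr:
  assumes k: "k \<in> cArr D"
  shows "pre_arr k \<in> hom C (pre_obj (cDom D k)) (pre_obj (cCod D k))"
    "farr F (pre_arr k) = cComp D (cInv D (counit (cCod D k))) (cComp D k (counit (cDom D k)))"
proof -
  have dom: "cDom D k \<in> cObj D" and cod: "cCod D k \<in> cObj D"
    using k groupoid_D by auto
  have "cComp D (cInv D (counit (cCod D k))) (cComp D k (counit (cDom D k)))
      \<in> hom D (fobj F (pre_obj (cDom D k))) (fobj F (pre_obj (cCod D k)))"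
    using k dom cod groupoid_D by (simp add: hom_def)
  then obtain f where "f \<in> hom C (pre_obj (cDom D k)) (pre_obj (cCod D k))"
    "farr F f = cComp D (cInv D (counit (cCod D k))) (cComp D k (counit (cDom D k)))"
    by (rule fullE[OF F_full pre_obj_counit(1)[OF dom] pre_obj_counit(1)[OF cod]])
  then have "f \<in> hom C (pre_obj (cDom D k)) (pre_obj (cCod D k)) \<and>
      farr F f = cComp D (cInv D (counit (cCod D k))) (cComp D k (counit (cDom D k)))"
    by blast
  then have "pre_arr k \<in> hom C (pre_obj (cDom D k)) (pre_obj (cCod D k)) \<and>
      farr F (pre_arr k) = cComp D (cInv D (counit (cCod D k))) (cComp D k (counit (cDom D k)))"
    unfolding pre_arr_def by (rule someI)
  then show "pre_arr k \<in> hom C (pre_obj (cDom D k)) (pre_obj (cCod D k))"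
    "farr F (pre_arr k) = cComp D (cInv D (counit (cCod D k))) (cComp D k (counit (cDom D k)))"
    by blast+
qed

definition quasi_inverse :: "('o2, 'm2, 'o1, 'm1) func" where
  "quasi_inverse = \<lparr>fobj = pre_obj, farr = pre_arr\<rparr>"

lemma quasi_inverse_functor: "is_functor D C quasi_inverse"
  unfolding is_functor_def quasi_inverse_def
proof (simp, intro conjI ballI impI)
  fix y assume y: "y \<in> cObj D"
  show "pre_obj y \<in> cObj C" using pre_obj_counit(1)[OF y] .
  have "pre_arr (cId D y) \<in> hom C (pre_obj y) (pre_obj y)"
    "cId C (pre_obj y) \<in> hom C (pre_obj y) (pre_obj y)"
    using pre_arr(1)[of "cId D y"] y groupoid_C groupoid_D pre_obj_counit(1)[OF y] by (auto simp: hom_def)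
  moreover have "farr F (pre_arr (cId D y)) = farr F (cId C (pre_obj y))"
    using pre_arr(2)[of "cId D y"] y groupoid_D F_functor pre_obj_counit(1)[OF y] by simp
  ultimately show "pre_arr (cId D y) = cId C (pre_obj y)"
    by (rule faithfulD[OF F_faithful])
next
  fix k assume "k \<in> cArr D"
  then show "pre_arr k \<in> hom C (pre_obj (cDom D k)) (pre_obj (cCod D k))"
    by (rule pre_arr(1))
next
  fix k1 k2 assume k: "k1 \<in> cArr D" "k2 \<in> cArr D" "cCod D k1 = cDom D k2"
  note arrs = pre_arr[OF k(1)] pre_arr[OF k(2)] pre_arr[of "cComp D k2 k1"]
  have "pre_arr (cComp D k2 k1) \<in> hom C (pre_obj (cDom D k1)) (pre_obj (cCod D k2))"
    "cComp C (pre_arr k2) (pre_arr k1) \<in> hom C (pre_obj (cDom D k1)) (pre_obj (cCod D k2))"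
    using arrs k groupoid_C groupoid_D by (auto simp: hom_def)
  moreover have "farr F (pre_arr (cComp D k2 k1)) = farr F (cComp C (pre_arr k2) (pre_arr k1))"
    using arrs k groupoid_C groupoid_D F_functor by (simp add: hom_def cat_assoc)
  ultimately show "pre_arr (cComp D k2 k1) = cComp C (pre_arr k2) (pre_arr k1)"
    by (rule faithfulD[OF F_faithful])
qed

definition unit :: "'o1 \<Rightarrow> 'm1" where
  "unit x = (SOME f. f \<in> hom C x (pre_obj (fobj F x)) \<and> farr F f = cInv D (counit (fobj F x)))"

lemma unit:
  assumes x: "x \<in> cObj C"
  shows "unit x \<in> hom C x (pre_obj (fobj F x))" "farr F (unit x) = cInv D (counit (fobj F x))"
proof -
  have Fx: "fobj F x \<in> cObj D" using F_functor x by simp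
  have "cInv D (counit (fobj F x)) \<in> hom D (fobj F x) (fobj F (pre_obj (fobj F x)))"
    using Fx groupoid_D by (simp add: hom_def)
  then obtain f where "f \<in> hom C x (pre_obj (fobj F x))" "farr F f = cInv D (counit (fobj F x))"
    by (rule fullE[OF F_full x pre_obj_counit(1)[OF Fx]])
  then have "f \<in> hom C x (pre_obj (fobj F x)) \<and> farr F f = cInv D (counit (fobj F x))"
    by blast
  then have "unit x \<in> hom C x (pre_obj (fobj F x)) \<and> farr F (unit x) = cInv D (counit (fobj F x))"
    unfolding unit_def by (rule someI)
  then show "unit x \<in> hom C x (pre_obj (fobj F x))" "farr F (unit x) = cInv D (counit (fobj F x))"
    by blast+
qed

lemma unit_nat_iso: "nat_iso C C id_func (func_comp quasi_inverse F) unit"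
  unfolding nat_iso_def
proof (intro conjI ballI)
  fix x assume x: "x \<in> cObj C"
  show "unit x \<in> hom C (fobj id_func x) (fobj (func_comp quasi_inverse F) x)"
    using unit(1)[OF x] by (simp add: id_func_def func_comp_def quasi_inverse_def)
  show "c_iso C (unit x)" using unit(1)[OF x] groupoid_C by (simp add: hom_def groupoid_iso)
next
  fix f assume f: "f \<in> cArr C"
  have Fx: "fobj F (cDom C f) \<in> cObj D" "fobj F (cCod C f) \<in> cObj D"
    using F_functor f groupoid_C by auto
  note arrs = unit[of "cDom C f"] unit[of "cCod C f"] pre_arr[of "farr F f"]
  have "cComp C (unit (cCod C f)) f \<in> hom C (cDom C f) (pre_obj (fobj F (cCod C f)))"
    "cComp C (pre_arr (farr F f)) (unit (cDom C f)) \<in> hom C (cDom C f) (pre_obj (fobj F (cCod C f)))"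
    using arrs f F_functor groupoid_C by (auto simp: hom_def)
  moreover have "farr F (cComp C (unit (cCod C f)) f) = farr F (cComp C (pre_arr (farr F f)) (unit (cDom C f)))"
    using arrs f F_functor groupoid_C groupoid_D Fx by (simp add: hom_def cat_assoc)
  ultimately show "cComp C (unit (cCod C f)) (farr id_func f) =
      cComp C (farr (func_comp quasi_inverse F) f) (unit (cDom C f))"
    unfolding id_func_def func_comp_def quasi_inverse_def by (simp add: faithfulD[OF F_faithful])
qed

lemma counit_nat_iso: "nat_iso D D (func_comp F quasi_inverse) id_func counit"
  unfolding nat_iso_def
proof (intro conjI ballI)
  fix y assume y: "y \<in> cObj D"
  show "counit y \<in> hom D (fobj (func_comp F quasi_inverse) y) (fobj id_func y)"
    using pre_obj_counit(2)[OF y] by (simp add: id_func_def func_comp_def quasi_inverse_def)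
  show "c_iso D (counit y)" using y groupoid_D by (simp add: groupoid_iso)
next
  fix k assume k: "k \<in> cArr D"
  show "cComp D (counit (cCod D k)) (farr (func_comp F quasi_inverse) k) = cComp D (farr id_func k) (counit (cDom D k))"
    unfolding id_func_def func_comp_def quasi_inverse_def
    using k pre_arr[OF k] groupoid_D by (simp add: cat_assoc)
qed

lemma equivalence: "equivalence C D F"
  unfolding equivalence_def
  using F_functor quasi_inverse_functor unit_nat_iso counit_nat_iso by blast

end

lemma equivalence_iff_ff_es:
  assumes "groupoid C" "groupoid D"
  shows "equivalence C D F \<longleftrightarrow> is_functor C D F \<and> faithful C F \<and> full C D F \<and> ess_surj C D F"
  using assms equivalence_faithful equivalence_full equivalence_ess_surj ff_es_functor.equivalence
  by (metis equivalence_def groupoid_category ff_es_functor.intro)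

section \<open>Large subsets and coatoms of B([n])\<close>

definition large :: "nat \<Rightarrow> nat set \<Rightarrow> bool" where
  "large n S \<longleftrightarrow> S \<in> Bn n \<and> n - 3 \<le> card S"

definition coatom :: "nat \<Rightarrow> nat set \<Rightarrow> bool" where
  "coatom n M \<longleftrightarrow> M \<in> Bn n \<and> card M = n - 1"

definition some_coatom :: "nat \<Rightarrow> nat set \<Rightarrow> nat set" where
  "some_coatom n U = (SOME M. coatom n M \<and> U \<subseteq> M)"

definition large_above :: "nat \<Rightarrow> nat set \<Rightarrow> nat set set" where
  "large_above n U = {V. large n V \<and> U \<subseteq> V}"

definition coatoms_above :: "nat \<Rightarrow> nat set \<Rightarrow> nat set set" where
  "coatoms_above n U = {M. coatom n M \<and> U \<subseteq> M}"

lemma Bn_finite: "U \<in> Bn n \<Longrightarrow> finite U"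
  unfolding Bn_def using finite_subset[of U "{1..n}"] by blast

lemma Bn_card_less: "U \<in> Bn n \<Longrightarrow> card U < n"
  unfolding Bn_def using psubset_card_mono[of "{1..n}" U] by auto

lemma Bn_subset: "V \<in> Bn n \<Longrightarrow> U \<subseteq> V \<Longrightarrow> U \<in> Bn n"
  unfolding Bn_def by blast

lemma large_Bn: "large n S \<Longrightarrow> S \<in> Bn n"
  by (simp add: large_def)

lemma coatom_large: "coatom n M \<Longrightarrow> large n M"
  unfolding coatom_def large_def by auto

lemma large_mono: "large n V \<Longrightarrow> V \<subseteq> W \<Longrightarrow> W \<in> Bn n \<Longrightarrow> large n W"
  unfolding large_def using card_mono[of W V] Bn_finite[of W n] by auto

lemma some_coatom:
  assumes "U \<in> Bn n"
  shows "coatom n (some_coatom n U)" "U \<subseteq> some_coatom n U"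
proof -
  from assms obtain i where i: "i \<in> {1..n}" "i \<notin> U" unfolding Bn_def by blast
  then have "coatom n ({1..n} - {i}) \<and> U \<subseteq> {1..n} - {i}"
    using assms unfolding coatom_def Bn_def by auto
  then have "coatom n (some_coatom n U) \<and> U \<subseteq> some_coatom n U"
    unfolding some_coatom_def by (rule someI)
  then show "coatom n (some_coatom n U)" "U \<subseteq> some_coatom n U" by blast+
qed

lemma card_compl_Bn: "U \<in> Bn n \<Longrightarrow> card ({1..n} - U) = n - card U"
  using card_Diff_subset[of U "{1..n}"] Bn_finite[of U n] unfolding Bn_def by auto

lemma card_compl_coatom: "coatom n M \<Longrightarrow> card ({1..n} - M) \<le> 1"
  unfolding coatom_def using card_compl_Bn by simp

lemma coatom_Int3_large:
  assumes "coatom n M" "coatom n M'" "coatom n M''"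
  shows "large n (M \<inter> M' \<inter> M'')"
proof -
  let ?K = "M \<inter> M' \<inter> M''"
  have K: "?K \<in> Bn n" using assms Bn_subset unfolding coatom_def by blast
  have "{1..n} - ?K = ({1..n} - M) \<union> ({1..n} - M') \<union> ({1..n} - M'')" by blast
  then have "card ({1..n} - ?K) \<le> 3"
    using card_Un_le[of "({1..n} - M) \<union> ({1..n} - M')" "{1..n} - M''"]
      card_Un_le[of "{1..n} - M" "{1..n} - M'"] card_compl_coatom[OF assms(1)]
      card_compl_coatom[OF assms(2)] card_compl_coatom[OF assms(3)] by simp
  with card_compl_Bn[OF K] show ?thesis
    using K unfolding large_def by simp
qed

lemma coatoms_above_sub_large_above: "coatoms_above n U \<subseteq> large_above n U"
  unfolding coatoms_above_def large_above_def using coatom_large by blast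

lemma some_coatom_above:
  assumes "U \<subseteq> V" "V \<in> Bn n"
  shows "some_coatom n V \<in> coatoms_above n U"
  using some_coatom[OF assms(2)] assms(1) unfolding coatoms_above_def by blast

lemma large_above_cofinal:
  assumes "V \<in> large_above n U"
  shows "\<exists>M\<in>coatoms_above n U. V \<subseteq> M"
proof
  have "large n V" "U \<subseteq> V" using assms unfolding large_above_def by auto
  then show "some_coatom n V \<in> coatoms_above n U" "V \<subseteq> some_coatom n V"
    using some_coatom_above some_coatom(2) large_Bn by blast+
qed

lemma coatoms_above_Int3:
  assumes "M \<in> coatoms_above n U" "M' \<in> coatoms_above n U" "M'' \<in> coatoms_above n U"
  shows "M \<inter> M' \<inter> M'' \<in> large_above n U"
  using coatom_Int3_large[of n M M' M''] assms unfolding coatoms_above_def large_above_def by blast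

definition large_cover :: "nat \<Rightarrow> nat set \<Rightarrow> nat set" where
  "large_cover n U = (if large n U then U else some_coatom n U)"

lemma large_cover:
  assumes "U \<in> Bn n"
  shows "large n (large_cover n U)" "U \<subseteq> large_cover n U" "large_cover n U \<in> Bn n"
  using some_coatom[OF assms] coatom_large large_Bn unfolding large_cover_def by auto

lemma large_cover_above: "U \<in> Bn n \<Longrightarrow> V \<in> Bn n \<Longrightarrow> U \<subseteq> V \<Longrightarrow> large_cover n V \<in> large_above n U"
  using large_cover unfolding large_above_def by blast

section \<open>Cocones on diagrams in a groupoid\<close>

locale groupoid_diagram =
  fixes C :: "('o, 'm) cat" and T :: "'i set set" and Mx :: "'i set set"
    and c :: "'i set \<Rightarrow> 'o" and r :: "'i set \<Rightarrow> 'i set \<Rightarrow> 'm"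
  assumes groupoid: "groupoid C"
    and Mx_subset: "Mx \<subseteq> T"
    and Mx_cofinal: "\<And>V. V \<in> T \<Longrightarrow> \<exists>M\<in>Mx. V \<subseteq> M"
    and Mx_Int3: "\<And>M M' M''. M \<in> Mx \<Longrightarrow> M' \<in> Mx \<Longrightarrow> M'' \<in> Mx \<Longrightarrow> M \<inter> M' \<inter> M'' \<in> T"
    and obj: "\<And>V. V \<in> T \<Longrightarrow> c V \<in> cObj C"
    and arr: "\<And>V W. V \<in> T \<Longrightarrow> W \<in> T \<Longrightarrow> V \<subseteq> W \<Longrightarrow> r V W \<in> hom C (c W) (c V)"
    and arr_id: "\<And>V. V \<in> T \<Longrightarrow> r V V = cId C (c V)"
    and arr_comp: "\<And>V W X. V \<in> T \<Longrightarrow> W \<in> T \<Longrightarrow> X \<in> T \<Longrightarrow> V \<subseteq> W \<Longrightarrow> W \<subseteq> X \<Longrightarrow>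
       r V X = cComp C (r V W) (r W X)"
begin

definition is_cocone :: "'o \<Rightarrow> ('i set \<Rightarrow> 'm) \<Rightarrow> bool" where
  "is_cocone d e \<longleftrightarrow> (\<forall>V\<in>T. e V \<in> hom C (c V) d) \<and>
     (\<forall>V\<in>T. \<forall>W\<in>T. V \<subseteq> W \<longrightarrow> e W = cComp C (e V) (r V W))"

lemma arr_simps [simp]:
  assumes "V \<in> T" "W \<in> T" "V \<subseteq> W"
  shows "r V W \<in> cArr C" "cDom C (r V W) = c W" "cCod C (r V W) = c V"
  using arr[OF assms] by (auto simp: hom_def)

lemma Mx_Int:
  assumes "M \<in> Mx" "M' \<in> Mx"
  shows "M \<inter> M' \<in> T"
proof -
  have "M \<inter> M' \<inter> M' = M \<inter> M'" by blast
  then show ?thesis using Mx_Int3[OF assms assms(2)] by simp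
qed

lemma cocone_hom: "is_cocone d e \<Longrightarrow> V \<in> T \<Longrightarrow> e V \<in> hom C (c V) d"
  unfolding is_cocone_def by blast

lemma cocone_comp: "is_cocone d e \<Longrightarrow> V \<in> T \<Longrightarrow> W \<in> T \<Longrightarrow> V \<subseteq> W \<Longrightarrow> e W = cComp C (e V) (r V W)"
  unfolding is_cocone_def by blast

lemma cocone_restrict:
  assumes e: "is_cocone d e" and VW: "V \<in> T" "W \<in> T" "V \<subseteq> W"
  shows "e V = cComp C (e W) (cInv C (r V W))"
  unfolding cocone_comp[OF e VW]
  using cocone_hom[OF e VW(1)] groupoid VW by (simp add: hom_def)

text \<open>Any index lies below a maximal one, and any two maximal ones meet inside the diagram.\<close>

lemma cocone_unique:
  assumes M0: "M0 \<in> Mx" and e: "is_cocone d e" and e': "is_cocone d e'"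
    and eq0: "e M0 = e' M0" and V: "V \<in> T"
  shows "e V = e' V"
proof -
  have on_Mx: "e M = e' M" if M: "M \<in> Mx" for M
  proof -
    have K: "M \<inter> M0 \<in> T" and MT: "M \<in> T" and M0T: "M0 \<in> T"
      using Mx_Int[OF M M0] M M0 Mx_subset by auto
    have "e (M \<inter> M0) = e' (M \<inter> M0)"
      using cocone_restrict[OF e K M0T] cocone_restrict[OF e' K M0T] eq0 by simp
    then show ?thesis using cocone_comp[OF e K MT] cocone_comp[OF e' K MT] by simp
  qed
  obtain M where M: "M \<in> Mx" "V \<subseteq> M" using Mx_cofinal[OF V] by blast
  have "M \<in> T" using M Mx_subset by blast
  then show ?thesis
    using cocone_restrict[OF e V _ M(2)] cocone_restrict[OF e' V _ M(2)] on_Mx[OF M(1)] by simp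
qed

definition transition :: "'i set \<Rightarrow> 'i set \<Rightarrow> 'm" where
  "transition M M' = cComp C (cInv C (r (M \<inter> M') M)) (r (M \<inter> M') M')"

lemma transition_arr:
  assumes "M \<in> Mx" "M' \<in> Mx"
  shows "transition M M' \<in> cArr C" "cDom C (transition M M') = c M'" "cCod C (transition M M') = c M"
proof -
  have "M \<inter> M' \<in> T" "M \<in> T" "M' \<in> T" using Mx_Int[OF assms] assms Mx_subset by auto
  then show "transition M M' \<in> cArr C" "cDom C (transition M M') = c M'" "cCod C (transition M M') = c M"
    unfolding transition_def using groupoid by simp_all
qed

lemma transition_eq:
  assumes M: "M \<in> Mx" "M' \<in> Mx" and L: "L \<in> T" "L \<subseteq> M \<inter> M'"
  shows "transition M M' = cComp C (cInv C (r L M)) (r L M')"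
proof -
  let ?K = "M \<inter> M'"
  have K: "?K \<in> T" and MT: "M \<in> T" "M' \<in> T" using Mx_Int[OF M] M Mx_subset by auto
  have "r L M = cComp C (r L ?K) (r ?K M)" "r L M' = cComp C (r L ?K) (r ?K M')"
    using arr_comp[OF L(1) K MT(1)] arr_comp[OF L(1) K MT(2)] L(2) by auto
  then show ?thesis
    unfolding transition_def using groupoid K MT L by (simp add: cat_assoc)
qed

lemma transition_cocycle:
  assumes "M \<in> Mx" "M' \<in> Mx" "M'' \<in> Mx"
  shows "transition M M'' = cComp C (transition M M') (transition M' M'')"
proof -
  let ?L = "M \<inter> M' \<inter> M''"
  have L: "?L \<in> T" using Mx_Int3[OF assms] .
  have T: "M \<in> T" "M' \<in> T" "M'' \<in> T" using assms Mx_subset by auto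
  have sub: "?L \<subseteq> M \<inter> M''" "?L \<subseteq> M \<inter> M'" "?L \<subseteq> M' \<inter> M''" "?L \<subseteq> M" "?L \<subseteq> M'" "?L \<subseteq> M''"
    by auto
  show ?thesis
    using transition_eq[OF assms(1,3) L sub(1)] transition_eq[OF assms(1,2) L sub(2)]
      transition_eq[OF assms(2,3) L sub(3)] groupoid L T sub(4-6) by (simp add: cat_assoc)
qed

text \<open>The cocone is obtained by transporting along a chosen maximal index above each index; the
  cocycle identity for the transitions, which needs triple intersections, makes it compatible.\<close>

lemma cocone_exists:
  assumes M0: "M0 \<in> Mx"
  shows "\<exists>e. is_cocone (c M0) e \<and> e M0 = cId C (c M0)"
proof -
  define top where "top V = (SOME M. M \<in> Mx \<and> V \<subseteq> M)" for V
  have top: "top V \<in> Mx" "V \<subseteq> top V" "top V \<in> T" if "V \<in> T" for V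
    using someI_ex[OF Mx_cofinal[OF that, unfolded Bex_def]] Mx_subset unfolding top_def by auto
  define e where "e V = cComp C (transition M0 (top V)) (cInv C (r V (top V)))" for V
  have M0T: "M0 \<in> T" using M0 Mx_subset by blast
  have e_hom: "e V \<in> hom C (c V) (c M0)" if V: "V \<in> T" for V
    unfolding e_def hom_def using groupoid transition_arr[OF M0 top(1)[OF V]] top[OF V] V by simp
  have e_comp: "e W = cComp C (e V) (r V W)" if VW: "V \<in> T" "W \<in> T" "V \<subseteq> W" for V W
  proof -
    have tr: "transition (top V) (top W) = cComp C (cInv C (r V (top V))) (r V (top W))"
      using transition_eq[OF top(1)[OF VW(1)] top(1)[OF VW(2)] VW(1)] top[OF VW(1)] top[OF VW(2)] VW(3)
      by blast
    have "r V (top W) = cComp C (r V W) (r W (top W))"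
      using arr_comp[OF VW(1,2) top(3)[OF VW(2)] VW(3) top(2)[OF VW(2)]] .
    then show ?thesis
      unfolding e_def transition_cocycle[OF M0 top(1)[OF VW(1)] top(1)[OF VW(2)]] tr
      using groupoid VW top[OF VW(1)] top[OF VW(2)] transition_arr[OF M0 top(1)[OF VW(1)]]
      by (simp add: cat_assoc)
  qed
  have "e M0 = cId C (c M0)"
  proof -
    have "transition M0 (top M0) = r M0 (top M0)"
      using transition_eq[OF M0 top(1)[OF M0T] M0T] top[OF M0T] arr_id[OF M0T] obj[OF M0T] groupoid M0T
      by simp
    then show ?thesis
      unfolding e_def using groupoid top[OF M0T] M0T by simp
  qed
  then show ?thesis
    using e_hom e_comp unfolding is_cocone_def by blast
qed

end

section \<open>The 2-limit of a groupoid-valued presheaf on B([n])\<close>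

locale groupoid_presheaf =
  fixes n :: nat and Psi :: "nat set \<Rightarrow> ('o, 'm) cat"
    and P :: "nat set \<Rightarrow> nat set \<Rightarrow> ('o, 'm, 'o, 'm) func"
  assumes presheaf: "gpd_presheaf n Psi P"
begin

lemma groupoid_Psi [simp]: "U \<in> Bn n \<Longrightarrow> groupoid (Psi U)"
  using presheaf[unfolded gpd_presheaf_def, THEN conjunct1] by blast

lemma restr_functor: "U \<in> Bn n \<Longrightarrow> V \<in> Bn n \<Longrightarrow> U \<subseteq> V \<Longrightarrow> is_functor (Psi V) (Psi U) (P U V)"
  using presheaf[unfolded gpd_presheaf_def, THEN conjunct2, THEN conjunct1] by blast

lemma restr_obj [simp]:
  "U \<in> Bn n \<Longrightarrow> V \<in> Bn n \<Longrightarrow> U \<subseteq> V \<Longrightarrow> x \<in> cObj (Psi V) \<Longrightarrow> fobj (P U V) x \<in> cObj (Psi U)"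
  using functor_obj[OF restr_functor] by blast

lemma restr_arr [simp]:
  assumes "U \<in> Bn n" "V \<in> Bn n" "U \<subseteq> V" "f \<in> cArr (Psi V)"
  shows "farr (P U V) f \<in> cArr (Psi U)"
    "cDom (Psi U) (farr (P U V) f) = fobj (P U V) (cDom (Psi V) f)"
    "cCod (Psi U) (farr (P U V) f) = fobj (P U V) (cCod (Psi V) f)"
  using functor_arr[OF restr_functor[OF assms(1-3)] assms(4)] by blast+

lemma restr_id [simp]:
  "U \<in> Bn n \<Longrightarrow> V \<in> Bn n \<Longrightarrow> U \<subseteq> V \<Longrightarrow> x \<in> cObj (Psi V) \<Longrightarrow>
   farr (P U V) (cId (Psi V) x) = cId (Psi U) (fobj (P U V) x)"
  using functor_id[OF restr_functor] by blast

lemma restr_comp [simp]: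
  "U \<in> Bn n \<Longrightarrow> V \<in> Bn n \<Longrightarrow> U \<subseteq> V \<Longrightarrow> f \<in> cArr (Psi V) \<Longrightarrow> g \<in> cArr (Psi V) \<Longrightarrow>
   cCod (Psi V) f = cDom (Psi V) g \<Longrightarrow>
   farr (P U V) (cComp (Psi V) g f) = cComp (Psi U) (farr (P U V) g) (farr (P U V) f)"
  using functor_comp[OF restr_functor] by blast

lemma restr_cInv [simp]:
  "U \<in> Bn n \<Longrightarrow> V \<in> Bn n \<Longrightarrow> U \<subseteq> V \<Longrightarrow> f \<in> cArr (Psi V) \<Longrightarrow>
   farr (P U V) (cInv (Psi V) f) = cInv (Psi U) (farr (P U V) f)"
  using functor_cInv[OF restr_functor] by simp

lemma restr_restr [simp]:
  "U \<in> Bn n \<Longrightarrow> V \<in> Bn n \<Longrightarrow> W \<in> Bn n \<Longrightarrow> U \<subseteq> V \<Longrightarrow> V \<subseteq> W \<Longrightarrow> x \<in> cObj (Psi W) \<Longrightarrow>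
   fobj (P U V) (fobj (P V W) x) = fobj (P U W) x"
  "U \<in> Bn n \<Longrightarrow> V \<in> Bn n \<Longrightarrow> W \<in> Bn n \<Longrightarrow> U \<subseteq> V \<Longrightarrow> V \<subseteq> W \<Longrightarrow> f \<in> cArr (Psi W) \<Longrightarrow>
   farr (P U V) (farr (P V W) f) = farr (P U W) f"
  using presheaf[unfolded gpd_presheaf_def, THEN conjunct2, THEN conjunct2, THEN conjunct2] by blast+

lemma restr_refl [simp]:
  "U \<in> Bn n \<Longrightarrow> x \<in> cObj (Psi U) \<Longrightarrow> fobj (P U U) x = x"
  "U \<in> Bn n \<Longrightarrow> f \<in> cArr (Psi U) \<Longrightarrow> farr (P U U) f = f"
  using presheaf[unfolded gpd_presheaf_def, THEN conjunct2, THEN conjunct2, THEN conjunct1] by blast+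

lemma lim_obj_pair_iff:
  "(a, al) \<in> lim_obj n Psi P \<longleftrightarrow>
     (\<forall>U. U \<notin> Bn n \<longrightarrow> a U = undefined) \<and>
     (\<forall>U V. \<not> (U \<in> Bn n \<and> V \<in> Bn n \<and> U \<subseteq> V) \<longrightarrow> al U V = undefined) \<and>
     (\<forall>U\<in>Bn n. a U \<in> cObj (Psi U)) \<and>
     (\<forall>U\<in>Bn n. \<forall>V\<in>Bn n. U \<subseteq> V \<longrightarrow> al U V \<in> hom (Psi U) (fobj (P U V) (a V)) (a U)) \<and>
     (\<forall>U\<in>Bn n. al U U = cId (Psi U) (a U)) \<and>
     (\<forall>U\<in>Bn n. \<forall>V\<in>Bn n. \<forall>W\<in>Bn n. U \<subseteq> V \<longrightarrow> V \<subseteq> W \<longrightarrow>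
        al U W = cComp (Psi U) (al U V) (farr (P U V) (al V W)))"
  unfolding lim_obj_def mem_Collect_eq prod.case ..

lemma lim_objD:
  assumes "x \<in> lim_obj n Psi P"
  shows "U \<notin> Bn n \<Longrightarrow> fst x U = undefined"
    and "U \<in> Bn n \<Longrightarrow> fst x U \<in> cObj (Psi U)"
    and "U \<in> Bn n \<Longrightarrow> V \<in> Bn n \<Longrightarrow> U \<subseteq> V \<Longrightarrow>
      snd x U V \<in> hom (Psi U) (fobj (P U V) (fst x V)) (fst x U)"
    and "U \<in> Bn n \<Longrightarrow> snd x U U = cId (Psi U) (fst x U)"
    and "U \<in> Bn n \<Longrightarrow> V \<in> Bn n \<Longrightarrow> W \<in> Bn n \<Longrightarrow> U \<subseteq> V \<Longrightarrow> V \<subseteq> W \<Longrightarrow>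
      snd x U W = cComp (Psi U) (snd x U V) (farr (P U V) (snd x V W))"
proof -
  obtain a al where x: "x = (a, al)" by (cases x)
  note H = assms[unfolded x lim_obj_pair_iff]
  show "U \<notin> Bn n \<Longrightarrow> fst x U = undefined"
    using H[THEN conjunct1] unfolding x fst_conv snd_conv by blast
  show "U \<in> Bn n \<Longrightarrow> fst x U \<in> cObj (Psi U)"
    using H[THEN conjunct2, THEN conjunct2, THEN conjunct1] unfolding x fst_conv snd_conv by blast
  show "U \<in> Bn n \<Longrightarrow> V \<in> Bn n \<Longrightarrow> U \<subseteq> V \<Longrightarrow>
      snd x U V \<in> hom (Psi U) (fobj (P U V) (fst x V)) (fst x U)"
    using H[THEN conjunct2, THEN conjunct2, THEN conjunct2, THEN conjunct1] unfolding x fst_conv snd_conv by blast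
  show "U \<in> Bn n \<Longrightarrow> snd x U U = cId (Psi U) (fst x U)"
    using H[THEN conjunct2, THEN conjunct2, THEN conjunct2, THEN conjunct2, THEN conjunct1] unfolding x fst_conv snd_conv by blast
  show "U \<in> Bn n \<Longrightarrow> V \<in> Bn n \<Longrightarrow> W \<in> Bn n \<Longrightarrow> U \<subseteq> V \<Longrightarrow> V \<subseteq> W \<Longrightarrow>
      snd x U W = cComp (Psi U) (snd x U V) (farr (P U V) (snd x V W))"
    using H[THEN conjunct2, THEN conjunct2, THEN conjunct2, THEN conjunct2, THEN conjunct2] unfolding x fst_conv snd_conv by blast
qed

lemma lim_obj_arr [simp]:
  assumes "x \<in> lim_obj n Psi P" "U \<in> Bn n" "V \<in> Bn n" "U \<subseteq> V"
  shows "snd x U V \<in> cArr (Psi U)" "cDom (Psi U) (snd x U V) = fobj (P U V) (fst x V)"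
    "cCod (Psi U) (snd x U V) = fst x U"
  using lim_objD(3)[OF assms] by (auto simp: hom_def)

definition natural_at :: "(nat set \<Rightarrow> 'o) \<times> (nat set \<Rightarrow> nat set \<Rightarrow> 'm) \<Rightarrow>
    (nat set \<Rightarrow> 'o) \<times> (nat set \<Rightarrow> nat set \<Rightarrow> 'm) \<Rightarrow> (nat set \<Rightarrow> 'm) \<Rightarrow> nat set \<Rightarrow> nat set \<Rightarrow> bool" where
  "natural_at x y g U V \<longleftrightarrow>
     cComp (Psi U) (g U) (snd x U V) = cComp (Psi U) (snd y U V) (farr (P U V) (g V))"

definition arr_family :: "(nat set \<Rightarrow> 'o) \<times> (nat set \<Rightarrow> nat set \<Rightarrow> 'm) \<Rightarrow>
    (nat set \<Rightarrow> 'o) \<times> (nat set \<Rightarrow> nat set \<Rightarrow> 'm) \<Rightarrow> (nat set \<Rightarrow> 'm) \<Rightarrow> bool" where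
  "arr_family x y g \<longleftrightarrow> (\<forall>U. U \<notin> Bn n \<longrightarrow> g U = undefined) \<and>
     (\<forall>U\<in>Bn n. g U \<in> hom (Psi U) (fst x U) (fst y U))"

lemma lim_arr_iff:
  "(x, y, g) \<in> lim_arr n Psi P \<longleftrightarrow> x \<in> lim_obj n Psi P \<and> y \<in> lim_obj n Psi P \<and> arr_family x y g \<and>
     (\<forall>U\<in>Bn n. \<forall>V\<in>Bn n. U \<subseteq> V \<longrightarrow> natural_at x y g U V)"
  unfolding lim_arr_def arr_family_def natural_at_def by auto

lemma lim_arrD:
  assumes "(x, y, g) \<in> lim_arr n Psi P"
  shows "x \<in> lim_obj n Psi P" "y \<in> lim_obj n Psi P" "arr_family x y g"
    "U \<in> Bn n \<Longrightarrow> V \<in> Bn n \<Longrightarrow> U \<subseteq> V \<Longrightarrow> natural_at x y g U V"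
  using assms unfolding lim_arr_iff by blast+

lemma arr_familyD:
  assumes "arr_family x y g"
  shows "U \<notin> Bn n \<Longrightarrow> g U = undefined" "U \<in> Bn n \<Longrightarrow> g U \<in> cArr (Psi U)"
    "U \<in> Bn n \<Longrightarrow> cDom (Psi U) (g U) = fst x U" "U \<in> Bn n \<Longrightarrow> cCod (Psi U) (g U) = fst y U"
  using assms unfolding arr_family_def hom_def by auto

lemma twolim_simps [simp]:
  "cObj (twolim n Psi P) = lim_obj n Psi P" "cArr (twolim n Psi P) = lim_arr n Psi P"
  "cDom (twolim n Psi P) (x, y, g) = x" "cCod (twolim n Psi P) (x, y, g) = y"
  "cId (twolim n Psi P) x = (x, x, \<lambda>U. if U \<in> Bn n then cId (Psi U) (fst x U) else undefined)"
  "cComp (twolim n Psi P) (y, z, h) (x, y', g) =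
     (x, z, \<lambda>U. if U \<in> Bn n then cComp (Psi U) (h U) (g U) else undefined)"
  by (simp_all add: twolim_def)

lemma lim_arr_id:
  assumes x: "x \<in> lim_obj n Psi P"
  shows "(x, x, \<lambda>U. if U \<in> Bn n then cId (Psi U) (fst x U) else undefined) \<in> lim_arr n Psi P"
  unfolding lim_arr_iff arr_family_def natural_at_def using lim_objD(2)[OF x] x by (auto simp: hom_def)

lemma lim_arr_comp:
  assumes g: "(x, y, g) \<in> lim_arr n Psi P" and h: "(y, z, h) \<in> lim_arr n Psi P"
  shows "(x, z, \<lambda>U. if U \<in> Bn n then cComp (Psi U) (h U) (g U) else undefined) \<in> lim_arr n Psi P"
  unfolding lim_arr_iff
proof (intro conjI ballI impI)
  note g' = lim_arrD[OF g] arr_familyD[OF lim_arrD(3)[OF g]]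
    and h' = lim_arrD[OF h] arr_familyD[OF lim_arrD(3)[OF h]]
  show "x \<in> lim_obj n Psi P" "z \<in> lim_obj n Psi P" using g' h' by blast+
  show "arr_family x z (\<lambda>U. if U \<in> Bn n then cComp (Psi U) (h U) (g U) else undefined)"
    unfolding arr_family_def using g' h' by (auto simp: hom_def)
  fix U V assume UV: "U \<in> Bn n" "V \<in> Bn n" "U \<subseteq> V"
  have "cComp (Psi U) (cComp (Psi U) (h U) (g U)) (snd x U V) =
        cComp (Psi U) (snd z U V) (cComp (Psi U) (farr (P U V) (h V)) (farr (P U V) (g V)))"
    by (rule comm_square_paste[where b = "snd y U V"])
      (use UV g' h' in \<open>auto simp: natural_at_def\<close>)
  then show "natural_at x z (\<lambda>U. if U \<in> Bn n then cComp (Psi U) (h U) (g U) else undefined) U V"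
    unfolding natural_at_def using UV g' h' by simp
qed

lemma lim_arr_inv:
  assumes g: "(x, y, g) \<in> lim_arr n Psi P"
  shows "(y, x, \<lambda>U. if U \<in> Bn n then cInv (Psi U) (g U) else undefined) \<in> lim_arr n Psi P"
  unfolding lim_arr_iff
proof (intro conjI ballI impI)
  note g' = lim_arrD[OF g] arr_familyD[OF lim_arrD(3)[OF g]]
  show "y \<in> lim_obj n Psi P" "x \<in> lim_obj n Psi P" using g' by blast+
  show "arr_family y x (\<lambda>U. if U \<in> Bn n then cInv (Psi U) (g U) else undefined)"
    unfolding arr_family_def using g' by (auto simp: hom_def)
  fix U V assume UV: "U \<in> Bn n" "V \<in> Bn n" "U \<subseteq> V"
  have "cComp (Psi U) (cInv (Psi U) (g U)) (snd y U V) =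
        cComp (Psi U) (snd x U V) (cInv (Psi U) (farr (P U V) (g V)))"
    by (rule comm_square_cInv) (use UV g' in \<open>auto simp: natural_at_def\<close>)
  then show "natural_at y x (\<lambda>U. if U \<in> Bn n then cInv (Psi U) (g U) else undefined) U V"
    unfolding natural_at_def using UV g' by simp
qed

lemma twolim_category: "category (twolim n Psi P)"
  unfolding category_def
proof (intro conjI ballI impI)
  fix f assume "f \<in> cArr (twolim n Psi P)"
  then obtain x y g where f: "f = (x, y, g)" "(x, y, g) \<in> lim_arr n Psi P" by (cases f) auto
  note g = arr_familyD[OF lim_arrD(3)[OF f(2)]]
  show "cDom (twolim n Psi P) f \<in> cObj (twolim n Psi P)" "cCod (twolim n Psi P) f \<in> cObj (twolim n Psi P)"
    using lim_arrD[OF f(2)] f(1) by simp_all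
  show "cComp (twolim n Psi P) (cId (twolim n Psi P) (cCod (twolim n Psi P) f)) f = f"
    "cComp (twolim n Psi P) f (cId (twolim n Psi P) (cDom (twolim n Psi P) f)) = f"
    using g f(1) by (auto intro!: ext)
next
  fix x assume "x \<in> cObj (twolim n Psi P)"
  then show "cId (twolim n Psi P) x \<in> hom (twolim n Psi P) x x"
    using lim_arr_id[of x] by (simp add: hom_def)
next
  fix f g assume "f \<in> cArr (twolim n Psi P)" "g \<in> cArr (twolim n Psi P)"
    "cCod (twolim n Psi P) f = cDom (twolim n Psi P) g"
  then obtain x y g1 z h where "f = (x, y, g1)" "g = (y, z, h)"
      "(x, y, g1) \<in> lim_arr n Psi P" "(y, z, h) \<in> lim_arr n Psi P"
    by (cases f, cases g) auto
  then show "cComp (twolim n Psi P) g f \<in> hom (twolim n Psi P) (cDom (twolim n Psi P) f) (cCod (twolim n Psi P) g)"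
    using lim_arr_comp by (simp add: hom_def)
next
  fix f g h assume "f \<in> cArr (twolim n Psi P)" "g \<in> cArr (twolim n Psi P)" "h \<in> cArr (twolim n Psi P)"
    "cCod (twolim n Psi P) f = cDom (twolim n Psi P) g" "cCod (twolim n Psi P) g = cDom (twolim n Psi P) h"
  then obtain x y g1 z h1 w k where fgh: "f = (x, y, g1)" "g = (y, z, h1)" "h = (z, w, k)"
      "arr_family x y g1" "arr_family y z h1" "arr_family z w k"
    by (cases f, cases g, cases h) (auto simp: lim_arr_iff)
  show "cComp (twolim n Psi P) h (cComp (twolim n Psi P) g f) = cComp (twolim n Psi P) (cComp (twolim n Psi P) h g) f"
    using arr_familyD[OF fgh(4)] arr_familyD[OF fgh(5)] arr_familyD[OF fgh(6)] fgh(1-3)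
    by (auto intro!: ext simp: cat_assoc)
qed

lemma twolim_groupoid: "groupoid (twolim n Psi P)"
  unfolding groupoid_def
proof (intro conjI twolim_category ballI)
  fix f assume f_arr: "f \<in> cArr (twolim n Psi P)"
  then obtain x y g where f: "f = (x, y, g)" "(x, y, g) \<in> lim_arr n Psi P" by (cases f) auto
  note g = arr_familyD[OF lim_arrD(3)[OF f(2)]]
  let ?inv = "(y, x, \<lambda>U. if U \<in> Bn n then cInv (Psi U) (g U) else undefined)"
  have "?inv \<in> hom (twolim n Psi P) (cCod (twolim n Psi P) f) (cDom (twolim n Psi P) f)"
    using lim_arr_inv[OF f(2)] f(1) by (simp add: hom_def)
  moreover have "cComp (twolim n Psi P) ?inv f = cId (twolim n Psi P) (cDom (twolim n Psi P) f)"
    "cComp (twolim n Psi P) f ?inv = cId (twolim n Psi P) (cCod (twolim n Psi P) f)"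
    using g f(1) by (auto intro!: ext)
  ultimately show "c_iso (twolim n Psi P) f"
    unfolding c_iso_def using f_arr by blast
qed

lemma natural_at_trans_iff:
  assumes x: "x \<in> lim_obj n Psi P" and y: "y \<in> lim_obj n Psi P" and g: "arr_family x y g"
    and U: "U \<in> Bn n" and V: "V \<in> Bn n" and W: "W \<in> Bn n" and UV: "U \<subseteq> V" and VW: "V \<subseteq> W"
    and nat_VW: "natural_at x y g V W"
  shows "natural_at x y g U W \<longleftrightarrow> natural_at x y g U V"
proof -
  have UW: "U \<subseteq> W" using UV VW by blast
  note facts = U V W UV VW UW arr_familyD[OF g] x y lim_objD(2)[OF x] lim_objD(2)[OF y]
  let ?xi = "farr (P U V) (snd x V W)"
  have L: "cComp (Psi U) (g U) (snd x U W) = cComp (Psi U) (cComp (Psi U) (g U) (snd x U V)) ?xi"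
    unfolding lim_objD(5)[OF x U V W UV VW] using facts by (simp add: cat_assoc)
  have "farr (P U V) (cComp (Psi V) (g V) (snd x V W)) =
      farr (P U V) (cComp (Psi V) (snd y V W) (farr (P V W) (g W)))"
    using nat_VW unfolding natural_at_def by simp
  then have pushed: "cComp (Psi U) (farr (P U V) (g V)) ?xi =
      cComp (Psi U) (farr (P U V) (snd y V W)) (farr (P U W) (g W))"
    using facts by simp
  have "cComp (Psi U) (cComp (Psi U) (snd y U V) (farr (P U V) (g V))) ?xi =
      cComp (Psi U) (snd y U V) (cComp (Psi U) (farr (P U V) (g V)) ?xi)"
    using facts by (simp add: cat_assoc)
  also have "\<dots> = cComp (Psi U) (snd y U V) (cComp (Psi U) (farr (P U V) (snd y V W)) (farr (P U W) (g W)))"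
    using pushed by simp
  also have "\<dots> = cComp (Psi U) (snd y U W) (farr (P U W) (g W))"
    unfolding lim_objD(5)[OF y U V W UV VW] using facts by (simp add: cat_assoc)
  finally have R: "cComp (Psi U) (snd y U W) (farr (P U W) (g W)) =
      cComp (Psi U) (cComp (Psi U) (snd y U V) (farr (P U V) (g V))) ?xi" by simp
  have xi_iso: "c_iso (Psi U) ?xi" using facts by (simp add: groupoid_iso)
  show ?thesis
    unfolding natural_at_def L R
    using iso_cancel_right[OF _ xi_iso, of "cComp (Psi U) (g U) (snd x U V)"
        "cComp (Psi U) (snd y U V) (farr (P U V) (g V))"] facts
    by auto
qed

text \<open>The component at U is conjugate, via the invertible structure map of the source, to the
  restriction of the component at a coatom above U.\<close>

lemma lim_arr_eqI:
  assumes g: "(x, y, g) \<in> lim_arr n Psi P" and g': "(x, y, g') \<in> lim_arr n Psi P"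
    and large_eq: "\<And>S. large n S \<Longrightarrow> g S = g' S"
  shows "g = g'"
proof
  fix U
  note x = lim_arrD(1)[OF g] and a = arr_familyD[OF lim_arrD(3)[OF g]]
    and b = arr_familyD[OF lim_arrD(3)[OF g']]
  show "g U = g' U"
  proof (cases "U \<in> Bn n")
    case False
    then show ?thesis using a b by simp
  next
    case U: True
    let ?M = "some_coatom n U"
    have M: "?M \<in> Bn n" "U \<subseteq> ?M" "large n ?M"
      using some_coatom[OF U] coatom_large large_Bn by blast+
    have eq: "cComp (Psi U) (g U) (snd x U ?M) = cComp (Psi U) (g' U) (snd x U ?M)"
      using lim_arrD(4)[OF g U M(1,2)] lim_arrD(4)[OF g' U M(1,2)] large_eq[OF M(3)]
      unfolding natural_at_def by simp
    have iso: "c_iso (Psi U) (snd x U ?M)" using U M x by (simp add: groupoid_iso)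
    show ?thesis
      by (rule iso_cancel_right[OF _ iso _ _ _ _ eq]) (use U M x a b in simp_all)
  qed
qed

definition extend_arr :: "(nat set \<Rightarrow> 'o) \<times> (nat set \<Rightarrow> nat set \<Rightarrow> 'm) \<Rightarrow>
    (nat set \<Rightarrow> 'o) \<times> (nat set \<Rightarrow> nat set \<Rightarrow> 'm) \<Rightarrow> (nat set \<Rightarrow> 'm) \<Rightarrow> nat set \<Rightarrow> 'm" where
  "extend_arr x y g U =
     (if U \<in> Bn n then
        if large n U then g U
        else cComp (Psi U) (cComp (Psi U) (snd y U (some_coatom n U)) (farr (P U (some_coatom n U)) (g (some_coatom n U))))
               (cInv (Psi U) (snd x U (some_coatom n U)))
      else undefined)"

lemma extend_arr_large: "large n S \<Longrightarrow> extend_arr x y g S = g S"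
  unfolding extend_arr_def using large_Bn by auto

context
  fixes x y :: "(nat set \<Rightarrow> 'o) \<times> (nat set \<Rightarrow> nat set \<Rightarrow> 'm)" and g :: "nat set \<Rightarrow> 'm"
  assumes x: "x \<in> lim_obj n Psi P" and y: "y \<in> lim_obj n Psi P"
    and g_hom: "\<And>S. large n S \<Longrightarrow> g S \<in> hom (Psi S) (fst x S) (fst y S)"
    and g_nat: "\<And>S T. large n S \<Longrightarrow> large n T \<Longrightarrow> S \<subseteq> T \<Longrightarrow> natural_at x y g S T"
begin

lemma extend_arr_family: "arr_family x y (extend_arr x y g)"
  unfolding arr_family_def
proof (intro conjI allI ballI impI)
  fix U assume "U \<notin> Bn n"
  then show "extend_arr x y g U = undefined" by (simp add: extend_arr_def)
next
  fix U assume U: "U \<in> Bn n"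
  let ?M = "some_coatom n U"
  have M: "?M \<in> Bn n" "U \<subseteq> ?M" "large n ?M"
    using some_coatom[OF U] coatom_large large_Bn by blast+
  show "extend_arr x y g U \<in> hom (Psi U) (fst x U) (fst y U)"
  proof (cases "large n U")
    case True
    then show ?thesis using extend_arr_large g_hom by simp
  next
    case False
    then show ?thesis
      unfolding extend_arr_def using U M g_hom[OF M(3)] x y lim_objD(2)[OF x] lim_objD(2)[OF y]
      by (simp add: hom_def)
  qed
qed

lemma natural_at_some_coatom:
  assumes U: "U \<in> Bn n" "\<not> large n U"
  shows "natural_at x y (extend_arr x y g) U (some_coatom n U)"
proof -
  let ?M = "some_coatom n U"
  have M: "?M \<in> Bn n" "U \<subseteq> ?M" "large n ?M"
    using some_coatom[OF U(1)] coatom_large large_Bn by blast+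
  show ?thesis
    unfolding natural_at_def extend_arr_large[OF M(3)]
    using U M g_hom[OF M(3)] x y lim_objD(2)[OF x] lim_objD(2)[OF y]
    by (simp add: extend_arr_def hom_def)
qed

text \<open>Away from the large sets, naturality is propagated along coatoms: two coatoms above U meet in
  a large set, and natural_at satisfies a two-out-of-three property.\<close>

lemma natural_at_extend_arr:
  assumes U: "U \<in> Bn n" and V: "V \<in> Bn n" and UV: "U \<subseteq> V"
  shows "natural_at x y (extend_arr x y g) U V"
proof -
  let ?h = "extend_arr x y g"
  have trans: "natural_at x y ?h U W \<longleftrightarrow> natural_at x y ?h U V'"
    if "U \<in> Bn n" "V' \<in> Bn n" "W \<in> Bn n" "U \<subseteq> V'" "V' \<subseteq> W" "natural_at x y ?h V' W" for U V' W
    using natural_at_trans_iff[OF x y extend_arr_family that] .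
  have large_nat: "natural_at x y ?h S T" if "large n S" "large n T" "S \<subseteq> T" for S T
    using g_nat[OF that] unfolding natural_at_def extend_arr_large[OF that(1)] extend_arr_large[OF that(2)] .
  have to_coatom: "natural_at x y ?h U' M" if U': "U' \<in> Bn n" "\<not> large n U'" and M: "coatom n M" "U' \<subseteq> M"
    for U' M
  proof -
    let ?M0 = "some_coatom n U'"
    have M0: "coatom n ?M0" "U' \<subseteq> ?M0" using some_coatom[OF U'(1)] by blast+
    let ?K = "?M0 \<inter> M"
    have K: "large n ?K" "U' \<subseteq> ?K" using coatom_Int3_large[OF M0(1) M(1) M(1)] M0(2) M(2) by auto
    have b: "?M0 \<in> Bn n" "M \<in> Bn n" "?K \<in> Bn n" "large n ?M0" "large n M"
      using M0 M K coatom_large large_Bn by blast+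
    have "natural_at x y ?h U' ?K"
      using trans[OF U'(1) b(3) b(1) K(2) _ large_nat[OF K(1) b(4)]] natural_at_some_coatom[OF U'] by blast
    then show ?thesis
      using trans[OF U'(1) b(3) b(2) K(2) _ large_nat[OF K(1) b(5)]] by blast
  qed
  show ?thesis
  proof (cases "large n U")
    case True
    then show ?thesis using large_nat large_mono UV V by blast
  next
    case False
    let ?M = "some_coatom n V"
    have M: "coatom n ?M" "V \<subseteq> ?M" "?M \<in> Bn n" "large n ?M"
      using some_coatom[OF V] coatom_large large_Bn by blast+
    have "natural_at x y ?h V ?M"
      using large_nat[OF _ M(4) M(2)] natural_at_some_coatom[OF V] by (cases "large n V") auto
    then show ?thesis
      using trans[OF U V M(3) UV M(2)] to_coatom[OF U False M(1)] M(2) UV by blast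
  qed
qed

lemma extend_arr_lim_arr: "(x, y, extend_arr x y g) \<in> lim_arr n Psi P"
  unfolding lim_arr_iff using x y extend_arr_family natural_at_extend_arr by blast

end

context
  fixes a :: "nat set \<Rightarrow> 'o" and al :: "nat set \<Rightarrow> nat set \<Rightarrow> 'm"
  assumes a_obj: "\<And>S. large n S \<Longrightarrow> a S \<in> cObj (Psi S)"
    and al_hom: "\<And>S T. large n S \<Longrightarrow> large n T \<Longrightarrow> S \<subseteq> T \<Longrightarrow>
      al S T \<in> hom (Psi S) (fobj (P S T) (a T)) (a S)"
    and al_id: "\<And>S. large n S \<Longrightarrow> al S S = cId (Psi S) (a S)"
    and al_cocycle: "\<And>S T W. large n S \<Longrightarrow> large n T \<Longrightarrow> large n W \<Longrightarrow> S \<subseteq> T \<Longrightarrow> T \<subseteq> W \<Longrightarrow>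
      al S W = cComp (Psi S) (al S T) (farr (P S T) (al T W))"
begin

lemma al_arr [simp]:
  assumes "large n S" "large n T" "S \<subseteq> T"
  shows "al S T \<in> cArr (Psi S)" "cDom (Psi S) (al S T) = fobj (P S T) (a T)" "cCod (Psi S) (al S T) = a S"
  using al_hom[OF assms] by (auto simp: hom_def)

lemma diagram_at:
  assumes U: "U \<in> Bn n" and V: "V \<in> Bn n" and UV: "U \<subseteq> V"
  shows "groupoid_diagram (Psi U) (large_above n V) (coatoms_above n V)
    (\<lambda>X. fobj (P U X) (a X)) (\<lambda>X Y. farr (P U X) (al X Y))"
proof unfold_locales
  have above: "large n X" "X \<in> Bn n" "U \<subseteq> X" if "X \<in> large_above n V" for X
    using that UV large_Bn unfolding large_above_def by auto
  show "groupoid (Psi U)" using U by simp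
  show "coatoms_above n V \<subseteq> large_above n V" by (rule coatoms_above_sub_large_above)
  show "\<And>X. X \<in> large_above n V \<Longrightarrow> \<exists>M\<in>coatoms_above n V. X \<subseteq> M" by (rule large_above_cofinal)
  show "\<And>M M' M''. M \<in> coatoms_above n V \<Longrightarrow> M' \<in> coatoms_above n V \<Longrightarrow> M'' \<in> coatoms_above n V \<Longrightarrow>
      M \<inter> M' \<inter> M'' \<in> large_above n V"
    by (rule coatoms_above_Int3)
  show "fobj (P U X) (a X) \<in> cObj (Psi U)" if "X \<in> large_above n V" for X
    using above[OF that] U a_obj by simp
  show "farr (P U X) (al X Y) \<in> hom (Psi U) (fobj (P U Y) (a Y)) (fobj (P U X) (a X))"
    if "X \<in> large_above n V" "Y \<in> large_above n V" "X \<subseteq> Y" for X Y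
    using above[OF that(1)] above[OF that(2)] that(3) U a_obj by (simp add: hom_def)
  show "farr (P U X) (al X X) = cId (Psi U) (fobj (P U X) (a X))" if "X \<in> large_above n V" for X
    using above[OF that] U a_obj al_id by simp
  show "farr (P U X) (al X Z) = cComp (Psi U) (farr (P U X) (al X Y)) (farr (P U Y) (al Y Z))"
    if "X \<in> large_above n V" "Y \<in> large_above n V" "Z \<in> large_above n V" "X \<subseteq> Y" "Y \<subseteq> Z" for X Y Z
    using above[OF that(1)] above[OF that(2)] above[OF that(3)] that(4,5) U a_obj
      al_cocycle[of X Y Z] by simp
qed

definition glue :: "nat set \<Rightarrow> nat set \<Rightarrow> 'm" where
  "glue U = (SOME e.
     groupoid_diagram.is_cocone (Psi U) (large_above n U) (\<lambda>X. fobj (P U X) (a X)) (\<lambda>X Y. farr (P U X) (al X Y))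
       (fobj (P U (some_coatom n U)) (a (some_coatom n U))) e \<and>
     e (some_coatom n U) = cId (Psi U) (fobj (P U (some_coatom n U)) (a (some_coatom n U))))"

lemma glue:
  assumes U: "U \<in> Bn n"
  shows "groupoid_diagram.is_cocone (Psi U) (large_above n U) (\<lambda>X. fobj (P U X) (a X)) (\<lambda>X Y. farr (P U X) (al X Y))
      (fobj (P U (some_coatom n U)) (a (some_coatom n U))) (glue U)"
    "glue U (some_coatom n U) = cId (Psi U) (fobj (P U (some_coatom n U)) (a (some_coatom n U)))"
proof -
  interpret D: groupoid_diagram "Psi U" "large_above n U" "coatoms_above n U"
    "\<lambda>X. fobj (P U X) (a X)" "\<lambda>X Y. farr (P U X) (al X Y)"
    using diagram_at[OF U U order_refl] .
  show "D.is_cocone (fobj (P U (some_coatom n U)) (a (some_coatom n U))) (glue U)"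
    "glue U (some_coatom n U) = cId (Psi U) (fobj (P U (some_coatom n U)) (a (some_coatom n U)))"
    using someI_ex[OF D.cocone_exists[OF some_coatom_above[OF order_refl U]]] unfolding glue_def by blast+
qed

lemma glue_arr:
  assumes U: "U \<in> Bn n" and X: "X \<in> large_above n U"
  shows "glue U X \<in> cArr (Psi U)" "cDom (Psi U) (glue U X) = fobj (P U X) (a X)"
    "cCod (Psi U) (glue U X) = fobj (P U (some_coatom n U)) (a (some_coatom n U))"
proof -
  interpret D: groupoid_diagram "Psi U" "large_above n U" "coatoms_above n U"
    "\<lambda>X. fobj (P U X) (a X)" "\<lambda>X Y. farr (P U X) (al X Y)"
    using diagram_at[OF U U order_refl] .
  show "glue U X \<in> cArr (Psi U)" "cDom (Psi U) (glue U X) = fobj (P U X) (a X)"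
    "cCod (Psi U) (glue U X) = fobj (P U (some_coatom n U)) (a (some_coatom n U))"
    using D.cocone_hom[OF glue(1)[OF U] X] by (auto simp: hom_def)
qed

lemma glue_comp:
  assumes U: "U \<in> Bn n" and X: "X \<in> large_above n U" and Y: "Y \<in> large_above n U" and XY: "X \<subseteq> Y"
  shows "glue U Y = cComp (Psi U) (glue U X) (farr (P U X) (al X Y))"
proof -
  interpret D: groupoid_diagram "Psi U" "large_above n U" "coatoms_above n U"
    "\<lambda>X. fobj (P U X) (a X)" "\<lambda>X Y. farr (P U X) (al X Y)"
    using diagram_at[OF U U order_refl] .
  show ?thesis using D.cocone_comp[OF glue(1)[OF U] X Y XY] .
qed

text \<open>Both sides are cocones on the same diagram in Psi U, and they agree at the chosen coatom
  above V.\<close>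

lemma glue_restr:
  assumes U: "U \<in> Bn n" and V: "V \<in> Bn n" and UV: "U \<subseteq> V" and X: "X \<in> large_above n V"
  shows "farr (P U V) (glue V X) = cComp (Psi U) (cInv (Psi U) (glue U (some_coatom n V))) (glue U X)"
proof -
  interpret D: groupoid_diagram "Psi U" "large_above n V" "coatoms_above n V"
    "\<lambda>X. fobj (P U X) (a X)" "\<lambda>X Y. farr (P U X) (al X Y)"
    using diagram_at[OF U V UV] .
  let ?M = "some_coatom n V"
  have above: "large n Y" "Y \<in> Bn n" "V \<subseteq> Y" "Y \<in> large_above n U" if "Y \<in> large_above n V" for Y
    using that UV large_Bn unfolding large_above_def by auto
  have M: "?M \<in> coatoms_above n V" "?M \<in> large_above n V"
    using some_coatom_above[OF order_refl V] coatoms_above_sub_large_above by blast+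
  note facts = U V UV a_obj glue_arr[OF V] glue_arr[OF U]
  have "D.is_cocone (fobj (P U ?M) (a ?M)) (\<lambda>X. farr (P U V) (glue V X))"
    unfolding D.is_cocone_def
  proof (intro conjI ballI impI)
    fix Y assume Y: "Y \<in> large_above n V"
    show "farr (P U V) (glue V Y) \<in> hom (Psi U) (fobj (P U Y) (a Y)) (fobj (P U ?M) (a ?M))"
      using facts above[OF Y] above[OF M(2)] Y M(2) by (simp add: hom_def)
    fix Z assume Z: "Z \<in> large_above n V" and YZ: "Y \<subseteq> Z"
    show "farr (P U V) (glue V Z) = cComp (Psi U) (farr (P U V) (glue V Y)) (farr (P U Y) (al Y Z))"
      unfolding glue_comp[OF V Y Z YZ] using facts above[OF Y] above[OF Z] YZ Y by simp
  qed
  moreover have "D.is_cocone (fobj (P U ?M) (a ?M))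
      (\<lambda>X. cComp (Psi U) (cInv (Psi U) (glue U ?M)) (glue U X))"
    unfolding D.is_cocone_def
  proof (intro conjI ballI impI)
    fix Y assume Y: "Y \<in> large_above n V"
    show "cComp (Psi U) (cInv (Psi U) (glue U ?M)) (glue U Y) \<in> hom (Psi U) (fobj (P U Y) (a Y)) (fobj (P U ?M) (a ?M))"
      using facts above[OF Y] above[OF M(2)] by (simp add: hom_def)
    fix Z assume Z: "Z \<in> large_above n V" and YZ: "Y \<subseteq> Z"
    show "cComp (Psi U) (cInv (Psi U) (glue U ?M)) (glue U Z) =
        cComp (Psi U) (cComp (Psi U) (cInv (Psi U) (glue U ?M)) (glue U Y)) (farr (P U Y) (al Y Z))"
      unfolding glue_comp[OF U above(4)[OF Y] above(4)[OF Z] YZ]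
      using facts above[OF Y] above[OF Z] above[OF M(2)] YZ by (simp add: cat_assoc)
  qed
  moreover have "farr (P U V) (glue V ?M) = cComp (Psi U) (cInv (Psi U) (glue U ?M)) (glue U ?M)"
    using facts glue(2)[OF V] above[OF M(2)] by simp
  ultimately show ?thesis
    using D.cocone_unique[OF M(1) _ _ _ X] by blast
qed

definition glued_obj :: "nat set \<Rightarrow> 'o" where
  "glued_obj U = (if U \<in> Bn n then fobj (P U (large_cover n U)) (a (large_cover n U)) else undefined)"

definition glued_restr :: "nat set \<Rightarrow> nat set \<Rightarrow> 'm" where
  "glued_restr U V =
     (if U \<in> Bn n \<and> V \<in> Bn n \<and> U \<subseteq> V then if large n U then al U V else glue U (large_cover n V)
      else undefined)"

lemma glued_obj_large: "large n S \<Longrightarrow> glued_obj S = a S"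
  unfolding glued_obj_def large_cover_def using a_obj large_Bn by simp

lemma glued_restr_large: "large n S \<Longrightarrow> large n T \<Longrightarrow> S \<subseteq> T \<Longrightarrow> glued_restr S T = al S T"
  unfolding glued_restr_def using large_Bn by simp

lemma glued_obj_small: "U \<in> Bn n \<Longrightarrow> \<not> large n U \<Longrightarrow> glued_obj U = fobj (P U (some_coatom n U)) (a (some_coatom n U))"
  unfolding glued_obj_def large_cover_def by simp

lemma glued_restr_hom:
  assumes U: "U \<in> Bn n" and V: "V \<in> Bn n" and UV: "U \<subseteq> V"
  shows "glued_restr U V \<in> hom (Psi U) (fobj (P U V) (glued_obj V)) (glued_obj U)"
proof (cases "large n U")
  case True
  then have "large n V" using large_mono UV V by blast
  then show ?thesis
    using al_hom[OF True _ UV] glued_obj_large True unfolding glued_restr_def using U V UV by simp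
next
  case False
  have "fobj (P U V) (glued_obj V) = fobj (P U (large_cover n V)) (a (large_cover n V))"
    unfolding glued_obj_def using U V UV large_cover[OF V] a_obj by simp
  then show ?thesis
    unfolding glued_restr_def glued_obj_small[OF U False]
    using glue_arr[OF U large_cover_above[OF U V UV]] U V UV False by (simp add: hom_def)
qed

lemma glued_restr_cocycle:
  assumes U: "U \<in> Bn n" and V: "V \<in> Bn n" and W: "W \<in> Bn n" and UV: "U \<subseteq> V" and VW: "V \<subseteq> W"
  shows "glued_restr U W = cComp (Psi U) (glued_restr U V) (farr (P U V) (glued_restr V W))"
proof -
  have UW: "U \<subseteq> W" using UV VW by blast
  consider "large n U" | "\<not> large n U" "large n V" | "\<not> large n U" "\<not> large n V" by blast
  then show ?thesis
  proof cases
    case 1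
    then have "large n V" "large n W" using large_mono UV VW V W by blast+
    with 1 show ?thesis
      using al_cocycle[of U V W] UV VW by (simp add: glued_restr_large)
  next
    case 2
    then have W': "large n W" using large_mono VW W by blast
    have "V \<in> large_above n U" "W \<in> large_above n U" using 2 W' UV UW unfolding large_above_def by auto
    then show ?thesis
      using glue_comp[OF U _ _ VW] 2 W' U V W UV VW UW
      unfolding glued_restr_def large_cover_def by simp
  next
    case 3
    have bW: "large_cover n W \<in> large_above n V" "large_cover n W \<in> large_above n U"
      using large_cover_above[OF V W VW] large_cover_above[OF U W UW] .
    have bV: "large_cover n V = some_coatom n V" "large_cover n V \<in> large_above n U"
      using 3 large_cover_above[OF U V UV] unfolding large_cover_def by auto
    have "glued_restr V W = glue V (large_cover n W)" "glued_restr U V = glue U (some_coatom n V)"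
      "glued_restr U W = glue U (large_cover n W)"
      using 3 U V W UV VW UW bV(1) unfolding glued_restr_def by auto
    then show ?thesis
      using glue_restr[OF U V UV bW(1)] glue_arr[OF U bW(2)] glue_arr[OF U bV(2)] bV(1) U
      by (simp add: cat_assoc)
  qed
qed

lemma glued_lim_obj: "(glued_obj, glued_restr) \<in> lim_obj n Psi P"
  unfolding lim_obj_pair_iff
proof (intro conjI allI ballI impI)
  fix U assume U: "U \<in> Bn n"
  show "glued_obj U \<in> cObj (Psi U)"
    unfolding glued_obj_def using U large_cover[OF U] a_obj by simp
  show "glued_restr U U = cId (Psi U) (glued_obj U)"
  proof (cases "large n U")
    case True
    then show ?thesis using al_id glued_obj_large glued_restr_large by simp
  next
    case False
    then show ?thesis
      using glue(2)[OF U] glued_obj_small[OF U False] U unfolding glued_restr_def large_cover_def by simp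
  qed
next
  fix U V W assume "U \<in> Bn n" "V \<in> Bn n" "W \<in> Bn n" "U \<subseteq> V" "V \<subseteq> W"
  then show "glued_restr U W = cComp (Psi U) (glued_restr U V) (farr (P U V) (glued_restr V W))"
    by (rule glued_restr_cocycle)
next
  fix U V assume "U \<in> Bn n" "V \<in> Bn n" "U \<subseteq> V"
  then show "glued_restr U V \<in> hom (Psi U) (fobj (P U V) (glued_obj V)) (glued_obj U)"
    by (rule glued_restr_hom)
qed (auto simp: glued_obj_def glued_restr_def)

end

end

section \<open>The functor between 2-limits induced by a natural transformation\<close>

locale presheaf_map =
  A: groupoid_presheaf n Phi P + B: groupoid_presheaf n Phi' P'
  for n :: nat and Phi :: "nat set \<Rightarrow> ('o, 'm) cat" and P :: "nat set \<Rightarrow> nat set \<Rightarrow> ('o, 'm, 'o, 'm) func"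
    and Phi' :: "nat set \<Rightarrow> ('o2, 'm2) cat" and P' :: "nat set \<Rightarrow> nat set \<Rightarrow> ('o2, 'm2, 'o2, 'm2) func" +
  fixes theta :: "nat set \<Rightarrow> ('o, 'm, 'o2, 'm2) func"
  assumes nat_trans: "gpd_nat_trans n Phi P Phi' P' theta"
    and large_equivalence: "\<And>S. large n S \<Longrightarrow> equivalence (Phi S) (Phi' S) (theta S)"
begin

lemma theta_functor: "U \<in> Bn n \<Longrightarrow> is_functor (Phi U) (Phi' U) (theta U)"
  using nat_trans[unfolded gpd_nat_trans_def, THEN conjunct1] by blast

lemma theta_restr [simp]:
  "U \<in> Bn n \<Longrightarrow> V \<in> Bn n \<Longrightarrow> U \<subseteq> V \<Longrightarrow> x \<in> cObj (Phi V) \<Longrightarrow>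
   fobj (theta U) (fobj (P U V) x) = fobj (P' U V) (fobj (theta V) x)"
  "U \<in> Bn n \<Longrightarrow> V \<in> Bn n \<Longrightarrow> U \<subseteq> V \<Longrightarrow> f \<in> cArr (Phi V) \<Longrightarrow>
   farr (theta U) (farr (P U V) f) = farr (P' U V) (farr (theta V) f)"
  using nat_trans[unfolded gpd_nat_trans_def, THEN conjunct2] by blast+

lemma theta_obj [simp]: "U \<in> Bn n \<Longrightarrow> x \<in> cObj (Phi U) \<Longrightarrow> fobj (theta U) x \<in> cObj (Phi' U)"
  using functor_obj[OF theta_functor] by blast

lemma theta_arr [simp]:
  assumes "U \<in> Bn n" "f \<in> cArr (Phi U)"
  shows "farr (theta U) f \<in> cArr (Phi' U)"
    "cDom (Phi' U) (farr (theta U) f) = fobj (theta U) (cDom (Phi U) f)"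
    "cCod (Phi' U) (farr (theta U) f) = fobj (theta U) (cCod (Phi U) f)"
  using functor_arr[OF theta_functor[OF assms(1)] assms(2)] by blast+

lemma theta_id [simp]:
  "U \<in> Bn n \<Longrightarrow> x \<in> cObj (Phi U) \<Longrightarrow> farr (theta U) (cId (Phi U) x) = cId (Phi' U) (fobj (theta U) x)"
  using functor_id[OF theta_functor] by blast

lemma theta_comp [simp]:
  "U \<in> Bn n \<Longrightarrow> f \<in> cArr (Phi U) \<Longrightarrow> g \<in> cArr (Phi U) \<Longrightarrow> cCod (Phi U) f = cDom (Phi U) g \<Longrightarrow>
   farr (theta U) (cComp (Phi U) g f) = cComp (Phi' U) (farr (theta U) g) (farr (theta U) f)"
  using functor_comp[OF theta_functor] by blast

lemma theta_on_large:
  assumes "large n S"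
  shows "faithful (Phi S) (theta S)" "full (Phi S) (Phi' S) (theta S)" "ess_surj (Phi S) (Phi' S) (theta S)"
  using large_equivalence[OF assms] equivalence_iff_ff_es[of "Phi S" "Phi' S"] large_Bn[OF assms] by simp_all

lemma lim_fobj_fst: "U \<in> Bn n \<Longrightarrow> fst (lim_fobj n theta x) U = fobj (theta U) (fst x U)"
  by (cases x) (simp add: lim_fobj_def)

lemma lim_fobj_snd:
  "U \<in> Bn n \<Longrightarrow> V \<in> Bn n \<Longrightarrow> U \<subseteq> V \<Longrightarrow> snd (lim_fobj n theta x) U V = farr (theta U) (snd x U V)"
  by (cases x) (simp add: lim_fobj_def)

lemma lim_func_simps [simp]:
  "fobj (lim_func n theta) x = lim_fobj n theta x"
  "farr (lim_func n theta) (x, y, g) =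
     (lim_fobj n theta x, lim_fobj n theta y, \<lambda>U. if U \<in> Bn n then farr (theta U) (g U) else undefined)"
  by (simp_all add: lim_func_def)

lemma lim_fobj_lim_obj:
  assumes x: "x \<in> lim_obj n Phi P"
  shows "lim_fobj n theta x \<in> lim_obj n Phi' P'"
proof -
  obtain a al where x_eq: "x = (a, al)" by (cases x)
  note facts = A.lim_objD(1-4)[OF x, unfolded x_eq fst_conv snd_conv]
    A.lim_obj_arr[OF x, unfolded x_eq fst_conv snd_conv]
  note cocycle = A.lim_objD(5)[OF x, unfolded x_eq snd_conv]
  show ?thesis
    unfolding x_eq lim_fobj_def prod.case B.lim_obj_pair_iff
  proof (intro conjI allI ballI impI)
    fix U V W assume UVW: "U \<in> Bn n" "V \<in> Bn n" "W \<in> Bn n" "U \<subseteq> V" "V \<subseteq> W"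
    then show "(if U \<in> Bn n \<and> W \<in> Bn n \<and> U \<subseteq> W then farr (theta U) (al U W) else undefined) =
        cComp (Phi' U) (if U \<in> Bn n \<and> V \<in> Bn n \<and> U \<subseteq> V then farr (theta U) (al U V) else undefined)
          (farr (P' U V) (if V \<in> Bn n \<and> W \<in> Bn n \<and> V \<subseteq> W then farr (theta V) (al V W) else undefined))"
      using cocycle[OF UVW] facts UVW by auto
  qed (use facts in \<open>auto simp: hom_def\<close>)
qed

lemma lim_func_lim_arr:
  assumes g: "(x, y, g) \<in> lim_arr n Phi P"
  shows "farr (lim_func n theta) (x, y, g) \<in> lim_arr n Phi' P'"
  unfolding lim_func_simps B.lim_arr_iff
proof (intro conjI ballI impI)
  note x = A.lim_arrD(1)[OF g] and y = A.lim_arrD(2)[OF g] and gg = A.arr_familyD[OF A.lim_arrD(3)[OF g]]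
  show "lim_fobj n theta x \<in> lim_obj n Phi' P'" "lim_fobj n theta y \<in> lim_obj n Phi' P'"
    using lim_fobj_lim_obj x y by blast+
  show "B.arr_family (lim_fobj n theta x) (lim_fobj n theta y) (\<lambda>U. if U \<in> Bn n then farr (theta U) (g U) else undefined)"
    unfolding B.arr_family_def using gg by (auto simp: lim_fobj_fst hom_def)
  fix U V assume UV: "U \<in> Bn n" "V \<in> Bn n" "U \<subseteq> V"
  have "farr (theta U) (cComp (Phi U) (g U) (snd x U V)) = farr (theta U) (cComp (Phi U) (snd y U V) (farr (P U V) (g V)))"
    using A.lim_arrD(4)[OF g UV] unfolding A.natural_at_def by simp
  then show "B.natural_at (lim_fobj n theta x) (lim_fobj n theta y) (\<lambda>U. if U \<in> Bn n then farr (theta U) (g U) else undefined) U V"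
    unfolding B.natural_at_def using UV gg x y by (simp add: lim_fobj_snd)
qed

lemma lim_func_functor: "is_functor (twolim n Phi P) (twolim n Phi' P') (lim_func n theta)"
  unfolding is_functor_def
proof (intro conjI ballI impI)
  fix x assume "x \<in> cObj (twolim n Phi P)"
  then have x: "x \<in> lim_obj n Phi P" by simp
  show "fobj (lim_func n theta) x \<in> cObj (twolim n Phi' P')"
    using lim_fobj_lim_obj[OF x] by simp
  show "farr (lim_func n theta) (cId (twolim n Phi P) x) = cId (twolim n Phi' P') (fobj (lim_func n theta) x)"
    using A.lim_objD(2)[OF x] by (auto simp: lim_fobj_fst intro!: ext)
next
  fix f assume "f \<in> cArr (twolim n Phi P)"
  then obtain x y g where f: "f = (x, y, g)" "(x, y, g) \<in> lim_arr n Phi P" by (cases f) auto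
  then show "farr (lim_func n theta) f \<in> hom (twolim n Phi' P') (fobj (lim_func n theta) (cDom (twolim n Phi P) f))
      (fobj (lim_func n theta) (cCod (twolim n Phi P) f))"
    using lim_func_lim_arr[OF f(2)] by (simp add: hom_def)
next
  fix f g assume "f \<in> cArr (twolim n Phi P)" "g \<in> cArr (twolim n Phi P)"
    "cCod (twolim n Phi P) f = cDom (twolim n Phi P) g"
  then obtain x y g1 z h where fg: "f = (x, y, g1)" "g = (y, z, h)" "A.arr_family x y g1" "A.arr_family y z h"
    by (cases f, cases g) (auto simp: A.lim_arr_iff)
  show "farr (lim_func n theta) (cComp (twolim n Phi P) g f) =
      cComp (twolim n Phi' P') (farr (lim_func n theta) g) (farr (lim_func n theta) f)"
    using A.arr_familyD[OF fg(3)] A.arr_familyD[OF fg(4)] fg(1,2) by (auto intro!: ext)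
qed

lemma lim_func_faithful: "faithful (twolim n Phi P) (lim_func n theta)"
  unfolding faithful_def
proof (intro allI ballI impI)
  fix x y f f' assume f: "f \<in> hom (twolim n Phi P) x y" "f' \<in> hom (twolim n Phi P) x y"
    and eq: "farr (lim_func n theta) f = farr (lim_func n theta) f'"
  obtain g g' where fg: "f = (x, y, g)" "f' = (x, y, g')"
    and g: "(x, y, g) \<in> lim_arr n Phi P" and g': "(x, y, g') \<in> lim_arr n Phi P"
    using f by (cases f, cases f') (auto simp: hom_def)
  note a = A.arr_familyD[OF A.lim_arrD(3)[OF g]] and b = A.arr_familyD[OF A.lim_arrD(3)[OF g']]
  have theta_eq: "farr (theta U) (g U) = farr (theta U) (g' U)" if "U \<in> Bn n" for U
    using eq fg that by (auto dest: fun_cong[where x = U])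
  have "g S = g' S" if S: "large n S" for S
    using faithfulD[OF theta_on_large(1)[OF S] _ _ theta_eq] large_Bn[OF S] a b by (simp add: hom_def)
  then show "f = f'"
    using A.lim_arr_eqI[OF g g'] fg by simp
qed

text \<open>An arrow between images is lifted on the large sets by fullness of theta there, where
  faithfulness also gives naturality; the lift then extends to all of B([n]).\<close>

lemma lift_large_arr:
  assumes x: "x \<in> lim_obj n Phi P" and y: "y \<in> lim_obj n Phi P"
    and k: "(lim_fobj n theta x, lim_fobj n theta y, k) \<in> lim_arr n Phi' P'"
  obtains g where "(x, y, g) \<in> lim_arr n Phi P" "\<And>S. large n S \<Longrightarrow> farr (theta S) (g S) = k S"
proof -
  note kk = B.arr_familyD[OF B.lim_arrD(3)[OF k]]
  define g0 where "g0 S = (SOME f. f \<in> hom (Phi S) (fst x S) (fst y S) \<and> farr (theta S) f = k S)" for S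
  have g0: "g0 S \<in> hom (Phi S) (fst x S) (fst y S) \<and> farr (theta S) (g0 S) = k S" if S: "large n S" for S
  proof -
    have Sb: "S \<in> Bn n" using large_Bn[OF S] .
    have "k S \<in> hom (Phi' S) (fobj (theta S) (fst x S)) (fobj (theta S) (fst y S))"
      using kk Sb by (simp add: hom_def lim_fobj_fst)
    then obtain f where "f \<in> hom (Phi S) (fst x S) (fst y S)" "farr (theta S) f = k S"
      by (rule fullE[OF theta_on_large(2)[OF S] A.lim_objD(2)[OF x Sb] A.lim_objD(2)[OF y Sb]])
    then have "f \<in> hom (Phi S) (fst x S) (fst y S) \<and> farr (theta S) f = k S" by blast
    then show ?thesis unfolding g0_def by (rule someI)
  qed
  have g0_nat: "A.natural_at x y g0 S T" if S: "large n S" and T: "large n T" and ST: "S \<subseteq> T" for S T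
  proof -
    have b: "S \<in> Bn n" "T \<in> Bn n" using S T large_Bn by auto
    note facts = g0[OF S] g0[OF T] b ST A.lim_obj_arr[OF x b ST] A.lim_obj_arr[OF y b ST]
      A.lim_objD(2)[OF x] A.lim_objD(2)[OF y]
    have "farr (theta S) (cComp (Phi S) (g0 S) (snd x S T)) =
        farr (theta S) (cComp (Phi S) (snd y S T) (farr (P S T) (g0 T)))"
      using B.lim_arrD(4)[OF k b ST] facts unfolding B.natural_at_def by (simp add: hom_def lim_fobj_snd)
    then show ?thesis
      unfolding A.natural_at_def using faithfulD[OF theta_on_large(1)[OF S]] facts by (simp add: hom_def)
  qed
  have "(x, y, A.extend_arr x y g0) \<in> lim_arr n Phi P"
    using A.extend_arr_lim_arr[OF x y _ g0_nat] g0 by blast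
  moreover have "farr (theta S) (A.extend_arr x y g0 S) = k S" if "large n S" for S
    using A.extend_arr_large[OF that] g0[OF that] by simp
  ultimately show ?thesis by (rule that)
qed

lemma lim_func_full: "full (twolim n Phi P) (twolim n Phi' P') (lim_func n theta)"
  unfolding full_def
proof (intro ballI)
  fix x y h assume "x \<in> cObj (twolim n Phi P)" "y \<in> cObj (twolim n Phi P)"
    and h: "h \<in> hom (twolim n Phi' P') (fobj (lim_func n theta) x) (fobj (lim_func n theta) y)"
  then have x: "x \<in> lim_obj n Phi P" and y: "y \<in> lim_obj n Phi P" by simp_all
  obtain k where h_eq: "h = (lim_fobj n theta x, lim_fobj n theta y, k)"
    and k: "(lim_fobj n theta x, lim_fobj n theta y, k) \<in> lim_arr n Phi' P'"
    using h by (cases h) (auto simp: hom_def)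
  obtain g where g: "(x, y, g) \<in> lim_arr n Phi P" and gk: "\<And>S. large n S \<Longrightarrow> farr (theta S) (g S) = k S"
    using lift_large_arr[OF x y k] by blast
  have "farr (lim_func n theta) (x, y, g) \<in> lim_arr n Phi' P'" by (rule lim_func_lim_arr[OF g])
  then have "(\<lambda>U. if U \<in> Bn n then farr (theta U) (g U) else undefined) = k"
    using B.lim_arr_eqI[OF _ k] gk large_Bn by simp
  then have "farr (lim_func n theta) (x, y, g) = h" by (simp add: h_eq)
  moreover have "(x, y, g) \<in> hom (twolim n Phi P) x y" using g by (simp add: hom_def)
  ultimately show "\<exists>f\<in>hom (twolim n Phi P) x y. farr (lim_func n theta) f = h" by blast
qed

definition lift_obj :: "(nat set \<Rightarrow> 'o2) \<times> (nat set \<Rightarrow> nat set \<Rightarrow> 'm2) \<Rightarrow> nat set \<Rightarrow> 'o" where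
  "lift_obj y S = (SOME a. a \<in> cObj (Phi S) \<and> hom (Phi' S) (fobj (theta S) a) (fst y S) \<noteq> {})"

definition lift_iso :: "(nat set \<Rightarrow> 'o2) \<times> (nat set \<Rightarrow> nat set \<Rightarrow> 'm2) \<Rightarrow> nat set \<Rightarrow> 'm2" where
  "lift_iso y S = (SOME e. e \<in> hom (Phi' S) (fobj (theta S) (lift_obj y S)) (fst y S))"

definition lift_restr :: "(nat set \<Rightarrow> 'o2) \<times> (nat set \<Rightarrow> nat set \<Rightarrow> 'm2) \<Rightarrow> nat set \<Rightarrow> nat set \<Rightarrow> 'm" where
  "lift_restr y S T = (SOME f. f \<in> hom (Phi S) (fobj (P S T) (lift_obj y T)) (lift_obj y S) \<and>
     farr (theta S) f = cComp (Phi' S) (cInv (Phi' S) (lift_iso y S))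
       (cComp (Phi' S) (snd y S T) (farr (P' S T) (lift_iso y T))))"

context
  fixes y assumes y: "y \<in> lim_obj n Phi' P'"
begin

lemma lift_obj_iso:
  assumes S: "large n S"
  shows "lift_obj y S \<in> cObj (Phi S)" "lift_iso y S \<in> cArr (Phi' S)"
    "cDom (Phi' S) (lift_iso y S) = fobj (theta S) (lift_obj y S)" "cCod (Phi' S) (lift_iso y S) = fst y S"
proof -
  obtain a e where "a \<in> cObj (Phi S)" "e \<in> hom (Phi' S) (fobj (theta S) a) (fst y S)"
    by (rule ess_surjE[OF theta_on_large(3)[OF S] B.lim_objD(2)[OF y large_Bn[OF S]]])
  then have "a \<in> cObj (Phi S) \<and> hom (Phi' S) (fobj (theta S) a) (fst y S) \<noteq> {}" by blast
  then have obj: "lift_obj y S \<in> cObj (Phi S) \<and> hom (Phi' S) (fobj (theta S) (lift_obj y S)) (fst y S) \<noteq> {}"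
    unfolding lift_obj_def by (rule someI)
  then have "lift_iso y S \<in> hom (Phi' S) (fobj (theta S) (lift_obj y S)) (fst y S)"
    unfolding lift_iso_def by (auto intro: someI_ex)
  with obj show "lift_obj y S \<in> cObj (Phi S)" "lift_iso y S \<in> cArr (Phi' S)"
    "cDom (Phi' S) (lift_iso y S) = fobj (theta S) (lift_obj y S)" "cCod (Phi' S) (lift_iso y S) = fst y S"
    by (auto simp: hom_def)
qed

lemma lift_restr:
  assumes S: "large n S" and T: "large n T" and ST: "S \<subseteq> T"
  shows "lift_restr y S T \<in> hom (Phi S) (fobj (P S T) (lift_obj y T)) (lift_obj y S)"
    "farr (theta S) (lift_restr y S T) = cComp (Phi' S) (cInv (Phi' S) (lift_iso y S))
       (cComp (Phi' S) (snd y S T) (farr (P' S T) (lift_iso y T)))"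
proof -
  have b: "S \<in> Bn n" "T \<in> Bn n" using S T large_Bn by auto
  let ?h = "cComp (Phi' S) (cInv (Phi' S) (lift_iso y S)) (cComp (Phi' S) (snd y S T) (farr (P' S T) (lift_iso y T)))"
  have "?h \<in> hom (Phi' S) (fobj (theta S) (fobj (P S T) (lift_obj y T))) (fobj (theta S) (lift_obj y S))"
    using b ST B.lim_obj_arr[OF y b ST] lift_obj_iso[OF S] lift_obj_iso[OF T] by (simp add: hom_def)
  then obtain f where "f \<in> hom (Phi S) (fobj (P S T) (lift_obj y T)) (lift_obj y S)" "farr (theta S) f = ?h"
    by (rule fullE[OF theta_on_large(2)[OF S] A.restr_obj[OF b ST lift_obj_iso(1)[OF T]] lift_obj_iso(1)[OF S]])
  then have "f \<in> hom (Phi S) (fobj (P S T) (lift_obj y T)) (lift_obj y S) \<and> farr (theta S) f = ?h" by blast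
  then have "lift_restr y S T \<in> hom (Phi S) (fobj (P S T) (lift_obj y T)) (lift_obj y S) \<and>
      farr (theta S) (lift_restr y S T) = ?h"
    unfolding lift_restr_def by (rule someI)
  then show "lift_restr y S T \<in> hom (Phi S) (fobj (P S T) (lift_obj y T)) (lift_obj y S)"
    "farr (theta S) (lift_restr y S T) = ?h" by blast+
qed

lemma lift_restr_arr [simp]:
  assumes "large n S" "large n T" "S \<subseteq> T"
  shows "lift_restr y S T \<in> cArr (Phi S)" "cDom (Phi S) (lift_restr y S T) = fobj (P S T) (lift_obj y T)"
    "cCod (Phi S) (lift_restr y S T) = lift_obj y S"
  using lift_restr(1)[OF assms] by (auto simp: hom_def)

lemma lift_restr_id:
  assumes S: "large n S"
  shows "lift_restr y S S = cId (Phi S) (lift_obj y S)"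
proof -
  have b: "S \<in> Bn n" using large_Bn[OF S] .
  have "farr (theta S) (lift_restr y S S) = farr (theta S) (cId (Phi S) (lift_obj y S))"
    using lift_restr(2)[OF S S order_refl] lift_obj_iso[OF S] b B.lim_objD(4)[OF y b] by simp
  then show ?thesis
    using faithfulD[OF theta_on_large(1)[OF S] lift_restr(1)[OF S S order_refl]] lift_obj_iso[OF S] b
    by (simp add: hom_def)
qed

lemma lift_restr_cocycle:
  assumes S: "large n S" and T: "large n T" and W: "large n W" and ST: "S \<subseteq> T" and TW: "T \<subseteq> W"
  shows "lift_restr y S W = cComp (Phi S) (lift_restr y S T) (farr (P S T) (lift_restr y T W))"
proof -
  have b: "S \<in> Bn n" "T \<in> Bn n" "W \<in> Bn n" and SW: "S \<subseteq> W" using S T W large_Bn ST TW by auto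
  note facts = b ST TW SW lift_obj_iso[OF S] lift_obj_iso[OF T] lift_obj_iso[OF W]
    lift_restr_arr[OF S T ST] lift_restr_arr[OF T W TW] lift_restr_arr[OF S W SW]
    B.lim_obj_arr[OF y b(1,2) ST] B.lim_obj_arr[OF y b(2,3) TW] B.lim_obj_arr[OF y b(1,3) SW]
    B.lim_objD(2)[OF y]
  have "farr (theta S) (cComp (Phi S) (lift_restr y S T) (farr (P S T) (lift_restr y T W))) =
      cComp (Phi' S) (farr (theta S) (lift_restr y S T)) (farr (P' S T) (farr (theta T) (lift_restr y T W)))"
    using facts by simp
  also have "\<dots> = cComp (Phi' S) (cInv (Phi' S) (lift_iso y S))
      (cComp (Phi' S) (cComp (Phi' S) (snd y S T) (farr (P' S T) (snd y T W))) (farr (P' S W) (lift_iso y W)))"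
    unfolding lift_restr(2)[OF S T ST] lift_restr(2)[OF T W TW] using facts by (simp add: cat_assoc)
  also have "\<dots> = farr (theta S) (lift_restr y S W)"
    unfolding lift_restr(2)[OF S W SW] B.lim_objD(5)[OF y b ST TW] ..
  finally have eq: "farr (theta S) (cComp (Phi S) (lift_restr y S T) (farr (P S T) (lift_restr y T W))) =
      farr (theta S) (lift_restr y S W)" .
  show ?thesis
    by (rule faithfulD[OF theta_on_large(1)[OF S] lift_restr(1)[OF S W SW] _ eq[symmetric]])
      (use facts in \<open>simp add: hom_def\<close>)
qed

end

lemma lim_func_ess_surj: "ess_surj (twolim n Phi P) (twolim n Phi' P') (lim_func n theta)"
  unfolding ess_surj_def
proof
  fix y assume "y \<in> cObj (twolim n Phi' P')"
  then have y: "y \<in> lim_obj n Phi' P'" by simp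
  let ?x = "(A.glued_obj (lift_obj y), A.glued_restr (lift_obj y) (lift_restr y))"
  note lifted = lift_obj_iso(1)[OF y] lift_restr(1)[OF y] lift_restr_id[OF y] lift_restr_cocycle[OF y]
  have x: "?x \<in> lim_obj n Phi P" by (rule A.glued_lim_obj[OF lifted])
  let ?Fx = "lim_fobj n theta ?x"
  have Fx_large: "fst ?Fx S = fobj (theta S) (lift_obj y S)"
    "snd ?Fx S T = farr (theta S) (lift_restr y S T)" if "large n S" "large n T" "S \<subseteq> T" for S T
    using that large_Bn A.glued_obj_large[OF lifted] A.glued_restr_large[OF lifted]
    by (simp_all add: lim_fobj_fst lim_fobj_snd)
  have "(?Fx, y, B.extend_arr ?Fx y (lift_iso y)) \<in> lim_arr n Phi' P'"
  proof (rule B.extend_arr_lim_arr[OF lim_fobj_lim_obj[OF x] y])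
    fix S assume S: "large n S"
    show "lift_iso y S \<in> hom (Phi' S) (fst ?Fx S) (fst y S)"
      using Fx_large(1)[OF S S order_refl] lift_obj_iso[OF y S] by (simp add: hom_def)
  next
    fix S T assume S: "large n S" and T: "large n T" and ST: "S \<subseteq> T"
    have b: "S \<in> Bn n" "T \<in> Bn n" using S T large_Bn by auto
    show "B.natural_at ?Fx y (lift_iso y) S T"
      unfolding B.natural_at_def Fx_large(2)[OF S T ST] lift_restr(2)[OF y S T ST]
      using lift_obj_iso[OF y S] lift_obj_iso[OF y T] B.lim_obj_arr[OF y b ST] b ST B.lim_objD(2)[OF y]
      by (simp add: cat_assoc)
  qed
  then have "(?Fx, y, B.extend_arr ?Fx y (lift_iso y)) \<in> hom (twolim n Phi' P') (fobj (lim_func n theta) ?x) y"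
    by (simp add: hom_def)
  then have "hom (twolim n Phi' P') (fobj (lim_func n theta) ?x) y \<noteq> {}"
    by blast
  moreover have "?x \<in> cObj (twolim n Phi P)" using x by simp
  ultimately show "\<exists>x\<in>cObj (twolim n Phi P). hom (twolim n Phi' P') (fobj (lim_func n theta) x) y \<noteq> {}"
    by blast
qed

lemma lim_func_equivalence: "equivalence (twolim n Phi P) (twolim n Phi' P') (lim_func n theta)"
  using A.twolim_groupoid B.twolim_groupoid lim_func_functor lim_func_faithful lim_func_full lim_func_ess_surj
  by (simp add: equivalence_iff_ff_es)

end

theorem corollary5p3:
  fixes n :: nat
    and Phi :: "nat set \<Rightarrow> ('o, 'm) cat"
    and P :: "nat set \<Rightarrow> nat set \<Rightarrow> ('o, 'm, 'o, 'm) func"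
    and Phi' :: "nat set \<Rightarrow> ('o2, 'm2) cat"
    and P' :: "nat set \<Rightarrow> nat set \<Rightarrow> ('o2, 'm2, 'o2, 'm2) func"
    and theta :: "nat set \<Rightarrow> ('o, 'm, 'o2, 'm2) func"
  assumes "n \<ge> 3"
    and "gpd_presheaf n Phi P"
    and "gpd_presheaf n Phi' P'"
    and "gpd_nat_trans n Phi P Phi' P' theta"
    and "\<forall>S. S \<subseteq> {1..n} \<and> n - 3 \<le> card S \<and> card S \<le> n - 1 \<longrightarrow>
              equivalence (Phi S) (Phi' S) (theta S)"
  shows "equivalence (twolim n Phi P) (twolim n Phi' P') (lim_func n theta)"
proof -
  have "equivalence (Phi S) (Phi' S) (theta S)" if "large n S" for S
    using that assms(5) Bn_card_less[of S n] unfolding large_def Bn_def by auto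
  then interpret presheaf_map n Phi P Phi' P' theta
    using assms(2-4) by (simp add: presheaf_map_def presheaf_map_axioms_def groupoid_presheaf_def)
  show ?thesis by (rule lim_func_equivalence)
qed

end
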